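(* Let $X\in\mathbb{R}^{m\times n}$ with $\operatorname{rank}(X)=r\le d$. Let $0<p\le 1$, $p_1>0$ and $p_2>0$ satisfy $1/p_1+1/p_2=1/p$. Then the minimum below is attained and \[ \|X\|_{S_p}=\min_{U\in\mathbb{R}^{m\times d},\,V\in\mathbb{R}^{n\times d}:\,X=UV^{T}}\|U\|_{S_{p_1}}\|V\|_{S_{p_2}}. \]
   Context: For $0<q<\infty$ and a real matrix $Y$ with singular values $\sigma_1(Y),\dots,\sigma_k(Y)$ ($k$ the smaller dimension of $Y$), the Schatten-$q$ (quasi-)norm is $\|Y\|_{S_q}=\left(\sum_{i=1}^{k}\sigma_i(Y)^q\right)^{1/q}$. *)

theory Defs
  imports "Jordan_Normal_Form.DL_Rank" "Jordan_Normal_Form.Char_Poly"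
    "HOL-Computational_Algebra.Polynomial"
begin

text \<open>Singular values of a real matrix Y are the square roots of the eigenvalues
  (with algebraic multiplicity) of Y^T Y.  The eigenvalues of the symmetric matrix
  Y^T Y are real, so they are exactly the multiset of real roots of its
  characteristic polynomial.  Extra zero eigenvalues (when Y has more columns than
  rows) contribute 0 to the sum since q > 0.\<close>

definition sq_singular_values :: "real mat \<Rightarrow> real multiset" where
  "sq_singular_values Y = proots (char_poly (transpose_mat Y * Y))"

definition schatten :: "real \<Rightarrow> real mat \<Rightarrow> real" where
  "schatten q Y =
     (\<Sum>\<^sub># (image_mset (\<lambda>t. (sqrt t) powr q) (sq_singular_values Y))) powr (1 / q)"

end

theory Submission
  imports Defs "HOL-Computational_Algebra.Fundamental_Theorem_Algebra"
    "Jordan_Normal_Form.Schur_Decomposition" "HOL-Analysis.Convex"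
begin

(* Writing a Gram matrix as Y^T Y = Q diag(f) Q^T with Q orthogonal, the squared singular values
   of Y are the f i, so Schatten norms become finite sums.

   Attainment: if X^T X = C diag(mu) C^T and x_i = X c_i, then the x_i are orthogonal with
   |x_i|^2 = mu_i, and X is the sum of the at most rank X outer products x_i c_i^T with mu_i > 0.
   Splitting sqrt mu_i = mu_i^(p/(2 p1)) * mu_i^(p/(2 p2)) between the two factors gives U, V
   with |U|_p1 |V|_p2 = |X|_p.

   Inequality, first for p1 >= 2 and p <= 2: with V^T V = G diag(tau) G^T, the vectors
   e_k = V g_k / sqrt tau_k (tau_k > 0) are orthonormal and span the range of V, which contains
   every eigenvector of X^T X with positive eigenvalue.  Concavity of t^(p/2) then gives
   sum_i mu_i^(p/2) <= sum_k |X e_k|^p = sum_k (tau_k |U g_k|^2)^(p/2), and Hoelder's inequality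
   together with convexity of t^(p1/2) under the doubly stochastic weights (h_i . g_k)^2 bounds
   this by |V|_p2^p |U|_p1^p.  For p1 < 2, factor U = U' W with |U|_p1 = |U'|_q1 |W|_r and
   q1 >= 2, apply the first case to U' and V W^T, and treat V W^T recursively: its exponent q2
   satisfies 2/q2 = max 1 (2/p - 1). *)

no_notation inner (infix \<open>\<bullet>\<close> 70)

definition diagonal :: "nat \<Rightarrow> (nat \<Rightarrow> 'a::zero) \<Rightarrow> 'a mat" where
  "diagonal k f = mat k k (\<lambda>(i, j). if i = j then f i else 0)"

lemma diagonal_carrier [simp]: "diagonal k f \<in> carrier_mat k k"
  and dim_row_diagonal [simp]: "dim_row (diagonal k f) = k"
  and dim_col_diagonal [simp]: "dim_col (diagonal k f) = k"
  by (simp_all add: diagonal_def)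

lemma index_diagonal [simp]:
  "i < k \<Longrightarrow> j < k \<Longrightarrow> diagonal k f $$ (i, j) = (if i = j then f i else 0)"
  by (simp add: diagonal_def)

lemma transpose_diagonal [simp]: "transpose_mat (diagonal k f) = diagonal k f"
  by (rule eq_matI) auto

lemma diagonal_mult_diagonal:
  fixes f g :: "nat \<Rightarrow> 'a::semiring_0"
  shows "diagonal k f * diagonal k g = diagonal k (\<lambda>i. f i * g i)"
proof (rule eq_matI)
  fix i j assume "i < dim_row (diagonal k (\<lambda>i. f i * g i))" "j < dim_col (diagonal k (\<lambda>i. f i * g i))"
  then have ij: "i < k" "j < k" by auto
  have "(diagonal k f * diagonal k g) $$ (i, j) = (\<Sum>l\<in>{0..<k}. diagonal k f $$ (i, l) * diagonal k g $$ (l, j))"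
    using ij by (simp add: scalar_prod_def)
  also have "\<dots> = (\<Sum>l\<in>{0..<k}. if l = i then (if i = j then f i * g i else 0) else 0)"
    using ij by (intro sum.cong) auto
  finally show "(diagonal k f * diagonal k g) $$ (i, j) = diagonal k (\<lambda>i. f i * g i) $$ (i, j)"
    using ij by simp
qed auto

lemma mult_diagonal_diagonal_mult:
  fixes A B :: "'a::comm_semiring_0 mat"
  assumes A: "A \<in> carrier_mat m d" and B: "B \<in> carrier_mat d n"
  shows "A * diagonal d f * (diagonal d g * B) = A * diagonal d (\<lambda>i. f i * g i) * B"
proof -
  have "A * diagonal d f * (diagonal d g * B) = A * (diagonal d f * (diagonal d g * B))"
    by (rule assoc_mult_mat[OF A diagonal_carrier mult_carrier_mat[OF diagonal_carrier B]])
  also have "diagonal d f * (diagonal d g * B) = diagonal d (\<lambda>i. f i * g i) * B"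
    unfolding diagonal_mult_diagonal[symmetric] by (rule assoc_mult_mat[symmetric, OF _ _ B]) auto
  also have "A * \<dots> = A * diagonal d (\<lambda>i. f i * g i) * B"
    by (rule assoc_mult_mat[symmetric, OF A diagonal_carrier B])
  finally show ?thesis .
qed

lemma gram_diagonal_mult_transpose:
  fixes H :: "'a::comm_semiring_0 mat"
  assumes H: "H \<in> carrier_mat d d"
  shows "transpose_mat (diagonal d e * transpose_mat H) * (diagonal d e * transpose_mat H)
    = H * diagonal d (\<lambda>i. e i * e i) * transpose_mat H"
proof -
  have "transpose_mat (diagonal d e * transpose_mat H) = H * diagonal d e"
    using transpose_mult[of "diagonal d e" d d "transpose_mat H" d] H by simp
  then show ?thesis
    using mult_diagonal_diagonal_mult[OF H, of "transpose_mat H"] H by simp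
qed

lemma col_mult_diagonal:
  fixes A :: "'a::comm_semiring_0 mat"
  assumes "A \<in> carrier_mat a k" and "j < k"
  shows "col (A * diagonal k f) j = f j \<cdot>\<^sub>v col A j"
proof (rule eq_vecI)
  fix i assume "i < dim_vec (f j \<cdot>\<^sub>v col A j)"
  then have i: "i < a" using assms by simp
  have "col (A * diagonal k f) j $ i = (\<Sum>l\<in>{0..<k}. A $$ (i, l) * diagonal k f $$ (l, j))"
    using assms i by (simp add: scalar_prod_def)
  also have "\<dots> = (\<Sum>l\<in>{0..<k}. if l = j then A $$ (i, j) * f j else 0)"
    using assms by (intro sum.cong) auto
  finally show "col (A * diagonal k f) j $ i = (f j \<cdot>\<^sub>v col A j) $ i"
    using assms i by (simp add: mult.commute)
qed (use assms in simp)

lemma diagonal_mult_vec: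
  fixes v :: "'a::semiring_0 vec"
  assumes "v \<in> carrier_vec k" and "i < k"
  shows "(diagonal k f *\<^sub>v v) $ i = f i * v $ i"
proof -
  have "(diagonal k f *\<^sub>v v) $ i = (\<Sum>j\<in>{0..<k}. (if i = j then f i else 0) * v $ j)"
    using assms by (simp add: scalar_prod_def)
  also have "\<dots> = (\<Sum>j\<in>{0..<k}. if j = i then f i * v $ i else 0)"
    by (rule sum.cong) auto
  finally show ?thesis using assms by simp
qed

lemma proots_char_poly_diagonal:
  fixes f :: "nat \<Rightarrow> 'a::idom"
  shows "proots (char_poly (diagonal k f)) = mset (map f [0..<k])"
proof -
  have "diag_mat (diagonal k f) = map f [0..<k]" by (auto simp: diag_mat_def)
  then have "char_poly (diagonal k f) = (\<Prod>a\<leftarrow>map f [0..<k]. [:- a, 1:])"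
    using char_poly_upper_triangular[of "diagonal k f" k] by (simp add: upper_triangular_def)
  also have "proots \<dots> = (\<Sum>a\<leftarrow>map f [0..<k]. {#a#})"
    using proots_prod_list[of "map (\<lambda>a. [:- a, 1:]) (map f [0..<k])"] by (force simp: o_def)
  also have "\<dots> = mset (map f [0..<k])"
    by (induction k) (simp_all add: add.commute)
  finally show ?thesis .
qed

lemma scalar_prod_self_nonneg: "(v :: real vec) \<bullet> v \<ge> 0"
  using conjugate_square_ge_0_vec[of v] by simp

lemma scalar_prod_normalize:
  fixes v :: "real vec"
  assumes "v \<in> carrier_vec n" and "v \<noteq> 0\<^sub>v n"
  shows "((1 / sqrt (v \<bullet> v)) \<cdot>\<^sub>v v) \<bullet> ((1 / sqrt (v \<bullet> v)) \<cdot>\<^sub>v v) = 1"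
proof -
  have "v \<bullet> v > 0"
    using conjugate_square_greater_0_vec[OF assms(1)] assms by simp
  then show ?thesis using assms(1) by (simp add: field_simps)
qed

lemma scalar_prod_mult_mat_vec_gram:
  fixes Y :: "'a::comm_semiring_0 mat"
  assumes "Y \<in> carrier_mat a b" and "x \<in> carrier_vec b" and "y \<in> carrier_vec b"
  shows "(Y *\<^sub>v x) \<bullet> (Y *\<^sub>v y) = x \<bullet> ((transpose_mat Y * Y) *\<^sub>v y)"
proof -
  have "(Y *\<^sub>v x) \<bullet> (Y *\<^sub>v y) = (transpose_mat Y *\<^sub>v (Y *\<^sub>v y)) \<bullet> x"
    using assms by (simp add: transpose_vec_mult_scalar comm_scalar_prod[of _ a])
  also have "\<dots> = x \<bullet> ((transpose_mat Y * Y) *\<^sub>v y)"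
    using assms by (simp add: comm_scalar_prod[of _ b])
  finally show ?thesis .
qed

(* Unlike orthogonal_mat of Jordan_Normal_Form, which only asks for pairwise orthogonal columns. *)
definition orth_mat :: "nat \<Rightarrow> real mat \<Rightarrow> bool" where
  "orth_mat n Q \<longleftrightarrow> Q \<in> carrier_mat n n \<and> transpose_mat Q * Q = 1\<^sub>m n"

lemma orth_mat_carrier: "orth_mat n Q \<Longrightarrow> Q \<in> carrier_mat n n"
  by (simp add: orth_mat_def)

lemma orth_mat_one: "orth_mat n (1\<^sub>m n)"
  by (simp add: orth_mat_def)

lemma orth_mat_right_inverse: "orth_mat n Q \<Longrightarrow> Q * transpose_mat Q = 1\<^sub>m n"
  using mat_mult_left_right_inverse[of "transpose_mat Q" n Q] by (auto simp: orth_mat_def)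

lemma orth_mat_mult:
  assumes "orth_mat n Q" and "orth_mat n P"
  shows "orth_mat n (Q * P)"
proof -
  have c: "Q \<in> carrier_mat n n" "P \<in> carrier_mat n n" using assms by (auto simp: orth_mat_def)
  have "transpose_mat (Q * P) * (Q * P) = transpose_mat P * (transpose_mat Q * Q) * P"
    using c by (simp add: transpose_mult assoc_mult_mat[of _ n n _ n _ n])
  also have "\<dots> = 1\<^sub>m n" using assms c by (simp add: orth_mat_def)
  finally show ?thesis using c unfolding orth_mat_def by auto
qed

lemma orth_mat_cols:
  assumes "orth_mat n Q" and "i < n" and "j < n"
  shows "col Q i \<bullet> col Q j = (if i = j then 1 else 0)"
proof -
  have "(transpose_mat Q * Q) $$ (i, j) = col Q i \<bullet> col Q j"
    using assms orth_mat_carrier[OF assms(1)] by simp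
  then show ?thesis using assms by (simp add: orth_mat_def)
qed

lemma parseval_orth_mat:
  assumes Q: "orth_mat n Q" and x: "x \<in> carrier_vec n"
  shows "(\<Sum>i<n. (col Q i \<bullet> x)\<^sup>2) = x \<bullet> x"
proof -
  have Qc: "Q \<in> carrier_mat n n" using Q by (rule orth_mat_carrier)
  have "(\<Sum>i<n. (col Q i \<bullet> x)\<^sup>2) = (transpose_mat Q *\<^sub>v x) \<bullet> (transpose_mat Q *\<^sub>v x)"
    using Qc x by (simp add: scalar_prod_def power2_eq_square atLeast0LessThan)
  also have "\<dots> = x \<bullet> ((Q * transpose_mat Q) *\<^sub>v x)"
    using Qc x by (simp add: scalar_prod_mult_mat_vec_gram[of _ n n])
  also have "\<dots> = x \<bullet> x"
    using orth_mat_right_inverse[OF Q] x by simp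
  finally show ?thesis .
qed

lemma orth_mat_similarity_trans:
  fixes A :: "real mat"
  assumes Q: "orth_mat n Q" and P: "P \<in> carrier_mat n n" and A: "A \<in> carrier_mat n n"
    and D: "D \<in> carrier_mat n n" and QAQ: "transpose_mat Q * A * Q = P * D * transpose_mat P"
  shows "A = (Q * P) * D * transpose_mat (Q * P)"
proof -
  have Qc: "Q \<in> carrier_mat n n" using Q by (rule orth_mat_carrier)
  have DP: "D * transpose_mat P \<in> carrier_mat n n" using D P by simp
  have PDP: "P * D * transpose_mat P \<in> carrier_mat n n" using D P by simp
  have "A = (Q * transpose_mat Q) * A * (Q * transpose_mat Q)"
    using orth_mat_right_inverse[OF Q] A by simp
  also have "\<dots> = Q * (transpose_mat Q * A * Q) * transpose_mat Q"
    using Qc A by (simp add: assoc_mult_mat[of _ n n _ n _ n])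
  also have "\<dots> = (Q * P) * D * transpose_mat (Q * P)"
    unfolding QAQ using Qc P D DP PDP
    by (simp add: transpose_mult[of _ n n] assoc_mult_mat[of _ n n _ n _ n])
  finally show ?thesis .
qed

lemma orth_mat_four_block:
  assumes "orth_mat k R"
  shows "orth_mat (Suc k) (four_block_mat (1\<^sub>m 1) (0\<^sub>m 1 k) (0\<^sub>m k 1) R)"
proof -
  have R: "R \<in> carrier_mat k k" using assms by (simp add: orth_mat_def)
  have "transpose_mat (four_block_mat (1\<^sub>m 1) (0\<^sub>m 1 k) (0\<^sub>m k 1) R)
      = four_block_mat (1\<^sub>m 1) (0\<^sub>m 1 k) (0\<^sub>m k 1) (transpose_mat R)"
    by (subst transpose_four_block_mat) (use R in auto)
  also have "\<dots> * four_block_mat (1\<^sub>m 1) (0\<^sub>m 1 k) (0\<^sub>m k 1) R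
      = four_block_mat (1\<^sub>m 1) (0\<^sub>m 1 k) (0\<^sub>m k 1) (transpose_mat R * R)"
    by (subst mult_four_block_mat) (use R in auto)
  finally show ?thesis
    using assms R four_block_carrier_mat[OF one_carrier_mat R, of 1] by (simp add: orth_mat_def)
qed

lemma orth_mat_with_first_col:
  fixes u :: "real vec"
  assumes u: "u \<in> carrier_vec n" and u1: "u \<bullet> u = 1"
  shows "\<exists>Q. orth_mat n Q \<and> col Q 0 = u"
proof -
  interpret cof_vec_space n "TYPE(real)" .
  have u0: "u \<noteq> 0\<^sub>v n" using u1 u by auto
  then have "0 < n" using u by (metis carrier_vecD eq_vecI index_zero_vec(2) less_nat_zero_code neq0_conv)
  define b where "b = basis_completion u"
  from basis_completion[OF u u0, folded b_def]
  have b: "distinct b" "\<not> lin_dep (set b)" "set b \<subseteq> carrier_vec n" "hd b = u" "length b = n"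
    by auto
  then obtain vs where bv: "b = u # vs" using \<open>0 < n\<close> by (cases b) auto
  define ws where "ws = gram_schmidt n b"
  have ws: "set ws \<subseteq> carrier_vec n" "corthogonal ws" "length ws = n"
    using gram_schmidt_result[OF b(3,1,2) ws_def] b(5) by auto
  have "hd ws = u" using gram_schmidt_hd[OF u, of vs] by (simp add: ws_def bv)
  then have ws0: "ws ! 0 = u" using ws(3) \<open>0 < n\<close> by (cases ws) auto
  define ws' where "ws' = map (\<lambda>w. (1 / sqrt (w \<bullet> w)) \<cdot>\<^sub>v w) ws"
  have ws'_nth: "i < n \<Longrightarrow> ws' ! i = (1 / sqrt (ws ! i \<bullet> ws ! i)) \<cdot>\<^sub>v ws ! i" for i
    using ws(3) by (simp add: ws'_def)
  have wsi: "i < n \<Longrightarrow> ws ! i \<in> carrier_vec n" for i using ws by auto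
  have ws_ortho: "i < n \<Longrightarrow> j < n \<Longrightarrow> ws ! i \<bullet> ws ! j = 0 \<longleftrightarrow> i \<noteq> j" for i j
    using corthogonalD[OF ws(2)] ws(3) by simp
  define Q where "Q = mat_of_cols n ws'"
  have Q: "Q \<in> carrier_mat n n"
    using mat_of_cols_carrier(1)[of n ws'] ws(3) by (simp add: Q_def ws'_def)
  have colQ: "i < n \<Longrightarrow> col Q i = ws' ! i" for i
    using wsi ws(3) by (simp add: Q_def ws'_def)
  have "transpose_mat Q * Q = 1\<^sub>m n"
  proof (rule eq_matI)
    fix i j assume "i < dim_row (1\<^sub>m n)" "j < dim_col (1\<^sub>m n)"
    then have ij: "i < n" "j < n" by auto
    have "(transpose_mat Q * Q) $$ (i, j) = ws' ! i \<bullet> ws' ! j"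
      using Q ij colQ by simp
    also have "\<dots> = 1\<^sub>m n $$ (i, j)"
    proof (cases "i = j")
      case True
      have "ws ! i \<noteq> 0\<^sub>v n" using ws_ortho[OF ij(1) ij(1)] wsi[OF ij(1)] by auto
      then show ?thesis using True ij ws'_nth scalar_prod_normalize[OF wsi[OF ij(1)]] by simp
    next
      case False
      then show ?thesis using ij ws'_nth wsi[OF ij(1)] wsi[OF ij(2)] ws_ortho[OF ij] by simp
    qed
    finally show "(transpose_mat Q * Q) $$ (i, j) = 1\<^sub>m n $$ (i, j)" .
  qed (use Q in auto)
  moreover have "col Q 0 = u"
    using colQ[OF \<open>0 < n\<close>] ws'_nth[OF \<open>0 < n\<close>] ws0 u1 by simp
  ultimately show ?thesis using Q unfolding orth_mat_def by blast
qed

section \<open>Spectral theorem for real symmetric matrices\<close>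

lemma conjugate_mult_mat_vec_of_real:
  fixes A :: "real mat"
  assumes "A \<in> carrier_mat n m" and "v \<in> carrier_vec m"
  shows "conjugate (map_mat complex_of_real A *\<^sub>v v) = map_mat complex_of_real A *\<^sub>v conjugate v"
proof (rule eq_vecI)
  fix i assume "i < dim_vec (map_mat complex_of_real A *\<^sub>v conjugate v)"
  then have i: "i < n" using assms by simp
  have "conjugate (row (map_mat complex_of_real A) i) = row (map_mat complex_of_real A) i"
    using assms i by (intro eq_vecI) auto
  then show "conjugate (map_mat complex_of_real A *\<^sub>v v) $ i = (map_mat complex_of_real A *\<^sub>v conjugate v) $ i"
    using assms i conjugate_sprod_vec[of "row (map_mat complex_of_real A) i" m v] by simp
qed (use assms in simp)

lemma real_symmetric_eigenvalue_real:
  fixes A :: "real mat"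
  assumes A: "A \<in> carrier_mat n n" and sym: "transpose_mat A = A"
    and ev: "eigenvalue (map_mat complex_of_real A) z"
  shows "Im z = 0"
proof -
  let ?A = "map_mat complex_of_real A"
  obtain v where v: "v \<in> carrier_vec n" "v \<noteq> 0\<^sub>v n" and Av: "?A *\<^sub>v v = z \<cdot>\<^sub>v v"
    using ev A unfolding eigenvalue_def eigenvector_def by auto
  have "z * (v \<bullet>c v) = (?A *\<^sub>v v) \<bullet>c v"
    using v by (simp add: Av)
  also have "\<dots> = (transpose_mat ?A *\<^sub>v v) \<bullet> conjugate v"
    using sym by (metis map_mat_transpose)
  also have "\<dots> = v \<bullet> conjugate (?A *\<^sub>v v)"
    using A v by (simp add: transpose_vec_mult_scalar conjugate_mult_mat_vec_of_real)
  also have "\<dots> = cnj z * (v \<bullet>c v)"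
    using v by (simp add: Av conjugate_smult_vec)
  finally have "(z - cnj z) * (v \<bullet>c v) = 0"
    by (simp add: algebra_simps)
  moreover have "v \<bullet>c v \<noteq> 0"
    using v by simp
  ultimately have "cnj z = z" by simp
  then show ?thesis by (metis Reals_cnj_iff complex_is_Real_iff)
qed

lemma real_symmetric_eigenvalue_exists:
  fixes A :: "real mat"
  assumes A: "A \<in> carrier_mat n n" and sym: "transpose_mat A = A" and "0 < n"
  shows "\<exists>\<mu>. eigenvalue A \<mu>"
proof -
  let ?A = "map_mat complex_of_real A"
  have cp: "char_poly ?A = map_poly complex_of_real (char_poly A)"
    by (rule of_real_hom.char_poly_hom[OF A])
  have "degree (char_poly ?A) = n"
    using degree_monic_char_poly[of ?A n] A by simp
  then have "\<not> constant (poly (char_poly ?A))"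
    using \<open>0 < n\<close> constant_degree[of "char_poly ?A"] by simp
  then obtain z where z: "poly (char_poly ?A) z = 0"
    using fundamental_theorem_of_algebra by blast
  then have "Im z = 0"
    using A by (intro real_symmetric_eigenvalue_real[OF A sym]) (simp add: eigenvalue_root_char_poly)
  then have "z = complex_of_real (Re z)" by (simp add: complex_eq_iff)
  with z have "poly (char_poly A) (Re z) = 0"
    by (metis cp of_real_eq_0_iff of_real_hom.poly_map_poly)
  then show ?thesis
    using eigenvalue_root_char_poly[OF A] by blast
qed

lemma real_symmetric_unit_eigenvector:
  fixes A :: "real mat"
  assumes A: "A \<in> carrier_mat n n" and sym: "transpose_mat A = A" and "0 < n"
  obtains \<mu> u where "u \<in> carrier_vec n" and "u \<bullet> u = 1" and "A *\<^sub>v u = \<mu> \<cdot>\<^sub>v u"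
proof -
  obtain \<mu> v where v: "v \<in> carrier_vec n" "v \<noteq> 0\<^sub>v n" and Av: "A *\<^sub>v v = \<mu> \<cdot>\<^sub>v v"
    using real_symmetric_eigenvalue_exists[OF assms] A unfolding eigenvalue_def eigenvector_def by auto
  define u where "u = (1 / sqrt (v \<bullet> v)) \<cdot>\<^sub>v v"
  have "A *\<^sub>v u = \<mu> \<cdot>\<^sub>v u"
    using mult_mat_vec[OF A v(1)] Av by (simp add: u_def smult_smult_assoc mult.commute)
  then show ?thesis
    using that[of u \<mu>] v scalar_prod_normalize[OF v] by (simp add: u_def)
qed

lemma symmetric_deflation:
  fixes A :: "real mat"
  assumes A: "A \<in> carrier_mat (Suc k) (Suc k)" and sym: "transpose_mat A = A"
    and Q: "orth_mat (Suc k) Q" and eig: "A *\<^sub>v col Q 0 = \<mu> \<cdot>\<^sub>v col Q 0"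
  shows "\<exists>B. B \<in> carrier_mat k k \<and> transpose_mat B = B \<and>
    transpose_mat Q * A * Q = four_block_mat (diagonal 1 (\<lambda>_. \<mu>)) (0\<^sub>m 1 k) (0\<^sub>m k 1) B"
proof -
  let ?n = "Suc k"
  define A' where "A' = transpose_mat Q * A * Q"
  have Qc: "Q \<in> carrier_mat ?n ?n" using Q by (simp add: orth_mat_def)
  have A': "A' \<in> carrier_mat ?n ?n" using Qc A by (simp add: A'_def)
  have "transpose_mat A' = transpose_mat Q * transpose_mat (transpose_mat Q * A)"
    unfolding A'_def by (rule transpose_mult[of _ ?n ?n]) (use Qc A in auto)
  also have "transpose_mat (transpose_mat Q * A) = A * Q"
    using Qc A sym by (subst transpose_mult[of _ ?n ?n]) auto
  also have "transpose_mat Q * (A * Q) = A'"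
    using Qc A by (simp add: A'_def)
  finally have "transpose_mat A' = A'" .
  then have symA': "i < ?n \<Longrightarrow> j < ?n \<Longrightarrow> A' $$ (i, j) = A' $$ (j, i)" for i j
    using A' by (metis carrier_matD index_transpose_mat(1))
  have A'0: "A' $$ (i, 0) = (if i = 0 then \<mu> else 0)" if i: "i < ?n" for i
  proof -
    have "A' $$ (i, 0) = (transpose_mat Q * (A * Q)) $$ (i, 0)"
      using Qc A by (simp add: A'_def assoc_mult_mat[of _ ?n ?n _ ?n _ ?n])
    also have "\<dots> = col Q i \<bullet> (A *\<^sub>v col Q 0)" using Qc A i by (simp add: mult_mat_vec_def)
    also have "\<dots> = \<mu> * (col Q i \<bullet> col Q 0)" using eig Qc i by simp
    finally show ?thesis using orth_mat_cols[OF Q i, of 0] by simp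
  qed
  define B where "B = mat k k (\<lambda>(i, j). A' $$ (Suc i, Suc j))"
  have "B \<in> carrier_mat k k" "transpose_mat B = B"
    by (auto simp: B_def symA' intro!: eq_matI)
  moreover have "A' = four_block_mat (diagonal 1 (\<lambda>_. \<mu>)) (0\<^sub>m 1 k) (0\<^sub>m k 1) B"
    by (rule eq_matI) (use A' A'0 symA' in \<open>auto simp: B_def\<close>)
  ultimately show ?thesis unfolding A'_def by blast
qed

lemma four_block_diagonal:
  "four_block_mat (diagonal 1 (\<lambda>_. \<mu>)) (0\<^sub>m 1 k) (0\<^sub>m k 1) (diagonal k g)
    = diagonal (Suc k) (\<lambda>i. if i = 0 then \<mu> else g (i - 1))"
  by (rule eq_matI) auto

lemma four_block_similarity:
  fixes R D :: "real mat"
  assumes R: "R \<in> carrier_mat k k" and D: "D \<in> carrier_mat k k"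
  defines "P \<equiv> four_block_mat (1\<^sub>m 1) (0\<^sub>m 1 k) (0\<^sub>m k 1) R"
  shows "P * four_block_mat (diagonal 1 (\<lambda>_. \<mu>)) (0\<^sub>m 1 k) (0\<^sub>m k 1) D * transpose_mat P
    = four_block_mat (diagonal 1 (\<lambda>_. \<mu>)) (0\<^sub>m 1 k) (0\<^sub>m k 1) (R * D * transpose_mat R)"
proof -
  have M: "diagonal 1 (\<lambda>_. \<mu>) \<in> carrier_mat 1 1" by simp
  have PT: "transpose_mat P = four_block_mat (1\<^sub>m 1) (0\<^sub>m 1 k) (0\<^sub>m k 1) (transpose_mat R)"
    unfolding P_def by (subst transpose_four_block_mat) (use R in auto)
  show ?thesis
    unfolding PT unfolding P_def
    by (subst mult_four_block_mat, (use R D M in auto)[8],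
        subst mult_four_block_mat, (use R D M in auto)[8]) (use R D M in auto)
qed

theorem real_symmetric_spectral:
  fixes A :: "real mat"
  assumes "A \<in> carrier_mat n n" and "transpose_mat A = A"
  shows "\<exists>Q f. orth_mat n Q \<and> A = Q * diagonal n f * transpose_mat Q"
  using assms
proof (induction n arbitrary: A)
  case 0
  then have "A = 1\<^sub>m 0 * diagonal 0 (\<lambda>_. 0) * transpose_mat (1\<^sub>m 0)"
    by (intro eq_matI) auto
  then show ?case using orth_mat_one by blast
next
  case (Suc k)
  let ?n = "Suc k"
  have A: "A \<in> carrier_mat ?n ?n" and sym: "transpose_mat A = A" by fact+
  obtain \<mu> u where u: "u \<in> carrier_vec ?n" "u \<bullet> u = 1" and Au: "A *\<^sub>v u = \<mu> \<cdot>\<^sub>v u"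
    using real_symmetric_unit_eigenvector[OF A sym] by blast
  obtain Q1 where Q1: "orth_mat ?n Q1" and "col Q1 0 = u"
    using orth_mat_with_first_col[OF u] by blast
  then obtain B where B: "B \<in> carrier_mat k k" "transpose_mat B = B"
    and A': "transpose_mat Q1 * A * Q1 = four_block_mat (diagonal 1 (\<lambda>_. \<mu>)) (0\<^sub>m 1 k) (0\<^sub>m k 1) B"
    using symmetric_deflation[OF A sym Q1] Au by blast
  obtain R g where R: "orth_mat k R" and Beq: "B = R * diagonal k g * transpose_mat R"
    using Suc.IH[OF B] by blast
  define P where "P = four_block_mat (1\<^sub>m 1) (0\<^sub>m 1 k) (0\<^sub>m k 1) R"
  define f where "f i = (if i = 0 then \<mu> else g (i - 1))" for i
  have P: "orth_mat ?n P" unfolding P_def by (rule orth_mat_four_block[OF R])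
  have "transpose_mat Q1 * A * Q1 = P * diagonal ?n f * transpose_mat P"
    unfolding A' Beq f_def P_def four_block_diagonal[symmetric]
    using four_block_similarity[OF orth_mat_carrier[OF R], of "diagonal k g"] by simp
  then have "A = (Q1 * P) * diagonal ?n f * transpose_mat (Q1 * P)"
    using orth_mat_similarity_trans[OF Q1 orth_mat_carrier[OF P] A diagonal_carrier] by blast
  then show ?case using orth_mat_mult[OF Q1 P] by blast
qed

lemma spectral_bilinear:
  assumes Q: "orth_mat k Q" and x: "x \<in> carrier_vec k" and y: "y \<in> carrier_vec k"
  shows "x \<bullet> ((Q * diagonal k f * transpose_mat Q) *\<^sub>v y) = (\<Sum>i<k. f i * (col Q i \<bullet> x) * (col Q i \<bullet> y))"
proof -
  have Qc: "Q \<in> carrier_mat k k" using Q by (rule orth_mat_carrier)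
  have Dy: "(diagonal k f *\<^sub>v (transpose_mat Q *\<^sub>v y)) $ i = f i * (col Q i \<bullet> y)" if "i < k" for i
    using that Qc y by (subst diagonal_mult_vec) auto
  have "(Q * diagonal k f * transpose_mat Q) *\<^sub>v y = Q *\<^sub>v (diagonal k f *\<^sub>v (transpose_mat Q *\<^sub>v y))"
    using Qc y by (simp add: assoc_mult_mat_vec[of _ k k _ k])
  then have "x \<bullet> ((Q * diagonal k f * transpose_mat Q) *\<^sub>v y)
      = (transpose_mat Q *\<^sub>v x) \<bullet> (diagonal k f *\<^sub>v (transpose_mat Q *\<^sub>v y))"
    using transpose_vec_mult_scalar[OF Qc mult_mat_vec_carrier[OF diagonal_carrier] x] Qc y by simp
  also have "\<dots> = (\<Sum>i<k. (col Q i \<bullet> x) * (f i * (col Q i \<bullet> y)))"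
    using Qc x y Dy by (simp add: scalar_prod_def atLeast0LessThan)
  finally show ?thesis by (simp add: mult_ac)
qed

lemma spectral_eigenvector:
  assumes Q: "orth_mat k Q" and j: "j < k"
  shows "(Q * diagonal k f * transpose_mat Q) *\<^sub>v col Q j = f j \<cdot>\<^sub>v col Q j"
proof -
  have Qc: "Q \<in> carrier_mat k k" using Q by (rule orth_mat_carrier)
  have "transpose_mat Q *\<^sub>v col Q j = unit_vec k j"
    by (rule eq_vecI) (use Qc j orth_mat_cols[OF Q] in auto)
  moreover have "diagonal k f *\<^sub>v unit_vec k j = f j \<cdot>\<^sub>v unit_vec k j"
    by (rule eq_vecI) (use j in \<open>auto simp: diagonal_mult_vec\<close>)
  moreover have "Q *\<^sub>v unit_vec k j = col Q j"
    by (rule eq_vecI) (use Qc j in auto)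
  ultimately show ?thesis
    using Qc j by (simp add: assoc_mult_mat_vec[of _ k k _ k] mult_mat_vec[of _ k k])
qed

lemma gram_spectral:
  fixes Y :: "real mat"
  assumes Y: "Y \<in> carrier_mat a k"
  shows "\<exists>Q f. orth_mat k Q \<and> transpose_mat Y * Y = Q * diagonal k f * transpose_mat Q \<and> (\<forall>i<k. f i \<ge> 0)"
proof -
  have "transpose_mat (transpose_mat Y * Y) = transpose_mat Y * Y"
    using Y by (simp add: transpose_mult[of _ k a])
  then obtain Q f where Q: "orth_mat k Q" and G: "transpose_mat Y * Y = Q * diagonal k f * transpose_mat Q"
    using real_symmetric_spectral[of "transpose_mat Y * Y" k] Y by auto
  have "f i \<ge> 0" if i: "i < k" for i
  proof -
    have ci: "col Q i \<in> carrier_vec k" using orth_mat_carrier[OF Q] i by simp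
    have "f i = col Q i \<bullet> ((transpose_mat Y * Y) *\<^sub>v col Q i)"
      unfolding G spectral_eigenvector[OF Q i] using ci orth_mat_cols[OF Q i i] by simp
    also have "\<dots> = (Y *\<^sub>v col Q i) \<bullet> (Y *\<^sub>v col Q i)"
      using Y ci by (simp add: scalar_prod_mult_mat_vec_gram)
    finally show ?thesis using scalar_prod_self_nonneg by simp
  qed
  then show ?thesis using Q G by blast
qed

lemma gram_spectral_cols:
  fixes Y :: "real mat"
  assumes Y: "Y \<in> carrier_mat a k" and Q: "orth_mat k Q"
    and G: "transpose_mat Y * Y = Q * diagonal k f * transpose_mat Q" and "i < k" and "j < k"
  shows "(Y *\<^sub>v col Q i) \<bullet> (Y *\<^sub>v col Q j) = (if i = j then f j else 0)"
proof -
  have c: "col Q i \<in> carrier_vec k" "col Q j \<in> carrier_vec k"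
    using orth_mat_carrier[OF Q] assms by auto
  have "(Y *\<^sub>v col Q i) \<bullet> (Y *\<^sub>v col Q j) = f j * (col Q i \<bullet> col Q j)"
    using Y c by (simp add: scalar_prod_mult_mat_vec_gram G spectral_eigenvector[OF Q \<open>j < k\<close>])
  then show ?thesis using orth_mat_cols[OF Q assms(4,5)] by simp
qed

lemma gram_spectral_null_col:
  fixes U :: "real mat"
  assumes U: "U \<in> carrier_mat m d" and H: "orth_mat d H"
    and UU: "transpose_mat U * U = H * diagonal d \<nu> * transpose_mat H" and "j < d" and "\<nu> j = 0"
  shows "U *\<^sub>v col H j = 0\<^sub>v m"
  using gram_spectral_cols[OF U H UU \<open>j < d\<close> \<open>j < d\<close>] assms(1,2,4,5)
    conjugate_square_eq_0_vec[of "U *\<^sub>v col H j" m] orth_mat_carrier[OF H] by simp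

lemma gram_spectral_expansion:
  fixes X :: "real mat"
  assumes X: "X \<in> carrier_mat m n" and C: "orth_mat n C"
    and XX: "transpose_mat X * X = C * diagonal n \<mu> * transpose_mat C" and \<mu>: "\<forall>i<n. \<mu> i \<ge> 0"
    and a: "a < m" and b: "b < n"
  shows "X $$ (a, b) = (\<Sum>i | i < n \<and> \<mu> i > 0. (X *\<^sub>v col C i) $ a * C $$ (b, i))"
proof -
  have Cc: "C \<in> carrier_mat n n" using C by (rule orth_mat_carrier)
  have XCC: "X * C * transpose_mat C = X"
    using X Cc by (simp add: orth_mat_right_inverse[OF C])
  have "X $$ (a, b) = (X * C * transpose_mat C) $$ (a, b)"
    by (simp only: XCC)
  also have "\<dots> = row (X * C) a \<bullet> col (transpose_mat C) b"
    by (rule index_mult_mat(1)) (use X Cc a b in auto)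
  also have "\<dots> = (\<Sum>i<n. (X *\<^sub>v col C i) $ a * C $$ (b, i))"
    using X Cc a b by (simp add: scalar_prod_def atLeast0LessThan)
  also have "\<dots> = (\<Sum>i | i < n \<and> \<mu> i > 0. (X *\<^sub>v col C i) $ a * C $$ (b, i))"
  proof (rule sum.mono_neutral_right)
    show "\<forall>i\<in>{..<n} - {i. i < n \<and> \<mu> i > 0}. (X *\<^sub>v col C i) $ a * C $$ (b, i) = 0"
    proof
      fix i assume "i \<in> {..<n} - {i. i < n \<and> \<mu> i > 0}"
      then have "i < n" "\<mu> i = 0" using \<mu> by (auto simp: order_le_less)
      then show "(X *\<^sub>v col C i) $ a * C $$ (b, i) = 0"
        using gram_spectral_null_col[OF X C XX] a by simp
    qed
  qed auto
  finally show ?thesis .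
qed

lemma mult_diagonal_eq_on_gram_support:
  fixes U :: "real mat"
  assumes U: "U \<in> carrier_mat m d" and H: "orth_mat d H"
    and UU: "transpose_mat U * U = H * diagonal d \<nu> * transpose_mat H" and \<nu>: "\<forall>i<d. \<nu> i \<ge> 0"
    and g: "\<And>j. j < d \<Longrightarrow> \<nu> j > 0 \<Longrightarrow> g j = 1"
  shows "U * H * diagonal d g = U * H"
proof (rule mat_col_eqI)
  have Hc: "H \<in> carrier_mat d d" using H by (rule orth_mat_carrier)
  have UH: "U * H \<in> carrier_mat m d" using U Hc by simp
  fix j assume "j < dim_col (U * H)"
  then have j: "j < d" using Hc by simp
  have "U *\<^sub>v col H j = 0\<^sub>v m" if "\<not> \<nu> j > 0"
    using that j \<nu> gram_spectral_null_col[OF U H UU j] by force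
  then show "col (U * H * diagonal d g) j = col (U * H) j"
    unfolding col_mult_diagonal[OF UH j] col_mult2[OF U Hc j] using g[OF j] by (cases "\<nu> j > 0") auto
qed (use orth_mat_carrier[OF H] in auto)

lemma gram_mult_transpose:
  fixes U V :: "'a::comm_ring_1 mat"
  assumes U: "U \<in> carrier_mat m d" and V: "V \<in> carrier_mat n d"
  shows "transpose_mat (U * transpose_mat V) * (U * transpose_mat V) = V * (transpose_mat U * U) * transpose_mat V"
proof -
  have "transpose_mat (U * transpose_mat V) = V * transpose_mat U"
    using transpose_mult[of U m d "transpose_mat V" n] U V by simp
  then show ?thesis
    using U V by (simp add: assoc_mult_mat[of _ n d _ m _ n] assoc_mult_mat[of _ d m _ d _ n]
        assoc_mult_mat[of _ n d _ d _ n])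
qed

lemma gram_mult_transpose_eigvec_in_range:
  fixes U V :: "real mat"
  assumes U: "U \<in> carrier_mat m d" and V: "V \<in> carrier_mat n d" and c: "c \<in> carrier_vec n"
    and eig: "(transpose_mat (U * transpose_mat V) * (U * transpose_mat V)) *\<^sub>v c = \<mu> \<cdot>\<^sub>v c"
    and "\<mu> \<noteq> 0"
  shows "\<exists>z \<in> carrier_vec d. c = V *\<^sub>v z"
proof
  define z where "z = (transpose_mat U * U) *\<^sub>v (transpose_mat V *\<^sub>v c)"
  have Vc: "transpose_mat V *\<^sub>v c \<in> carrier_vec d" using V c by simp
  then have z: "z \<in> carrier_vec d" using U by (simp add: z_def)
  have "\<mu> \<cdot>\<^sub>v c = (V * (transpose_mat U * U) * transpose_mat V) *\<^sub>v c"
    using eig U V by (simp add: gram_mult_transpose)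
  also have "\<dots> = (V * (transpose_mat U * U)) *\<^sub>v (transpose_mat V *\<^sub>v c)"
    by (rule assoc_mult_mat_vec[of _ n d]) (use U V c in auto)
  also have "\<dots> = V *\<^sub>v z"
    unfolding z_def by (rule assoc_mult_mat_vec[of _ n d]) (use U V Vc in auto)
  finally have "\<mu> \<cdot>\<^sub>v c = V *\<^sub>v z" .
  then have "(1 / \<mu>) \<cdot>\<^sub>v (\<mu> \<cdot>\<^sub>v c) = V *\<^sub>v ((1 / \<mu>) \<cdot>\<^sub>v z)"
    using V z by (simp add: mult_mat_vec[OF V z])
  then show "c = V *\<^sub>v ((1 / \<mu>) \<cdot>\<^sub>v z)" using \<open>\<mu> \<noteq> 0\<close> by (simp add: smult_smult_assoc)
  show "(1 / \<mu>) \<cdot>\<^sub>v z \<in> carrier_vec d" using z by simp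
qed

lemma sq_singular_values_eq:
  assumes Y: "Y \<in> carrier_mat a k" and Q: "orth_mat k Q"
    and gram: "transpose_mat Y * Y = Q * diagonal k f * transpose_mat Q"
  shows "sq_singular_values Y = mset (map f [0..<k])"
proof -
  have "similar_mat_wit (transpose_mat Y * Y) (diagonal k f) Q (transpose_mat Q)"
    unfolding similar_mat_wit_def Let_def
    using Y orth_mat_carrier[OF Q] orth_mat_right_inverse[OF Q] Q gram by (auto simp: orth_mat_def)
  then have "char_poly (transpose_mat Y * Y) = char_poly (diagonal k f)"
    by (intro char_poly_similar) (auto simp: similar_mat_def)
  then show ?thesis by (simp add: sq_singular_values_def proots_char_poly_diagonal)
qed

lemma sqrt_powr: "x \<ge> 0 \<Longrightarrow> sqrt x powr p = x powr (p / 2)"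
  by (simp add: powr_half_sqrt[symmetric] powr_powr)

lemma powr_half_mult_self: "x powr (a / 2) * x powr (a / 2) = (x :: real) powr a"
  by (simp add: powr_add[symmetric])

lemma schatten_eq_sum:
  assumes "Y \<in> carrier_mat a k" and "orth_mat k Q"
    and "transpose_mat Y * Y = Q * diagonal k f * transpose_mat Q" and "\<forall>i<k. f i \<ge> 0"
  shows "schatten q Y = (\<Sum>i<k. f i powr (q / 2)) powr (1 / q)"
proof -
  have "(\<Sum>\<^sub># (image_mset (\<lambda>t. sqrt t powr q) (mset (map f [0..<k])))) = (\<Sum>i<k. sqrt (f i) powr q)"
    by (induction k) auto
  also have "\<dots> = (\<Sum>i<k. f i powr (q / 2))"
    using assms(4) by (simp add: sqrt_powr)
  finally show ?thesis by (simp add: schatten_def sq_singular_values_eq[OF assms(1-3)])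
qed

lemma schatten_nonneg: "schatten q Y \<ge> 0"
  by (simp add: schatten_def)

lemma gram_diagonal_of_orthogonal_cols:
  fixes Y :: "real mat"
  assumes Y: "Y \<in> carrier_mat a k"
    and cols: "\<And>i j. i < k \<Longrightarrow> j < k \<Longrightarrow> col Y i \<bullet> col Y j = (if i = j then f j else 0)"
  shows "transpose_mat Y * Y = 1\<^sub>m k * diagonal k f * transpose_mat (1\<^sub>m k)"
  by (rule eq_matI) (use Y cols in auto)

lemma schatten_orthogonal_cols:
  fixes Y :: "real mat"
  assumes Y: "Y \<in> carrier_mat a k"
    and cols: "\<And>i j. i < k \<Longrightarrow> j < k \<Longrightarrow> col Y i \<bullet> col Y j = (if i = j then f j else 0)"
    and f: "\<forall>i<k. f i \<ge> 0"
  shows "schatten q Y = (\<Sum>i<k. f i powr (q / 2)) powr (1 / q)"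
  using schatten_eq_sum[OF Y orth_mat_one gram_diagonal_of_orthogonal_cols[OF Y cols] f] .

lemma sum_reindex_bij_betw_prefix:
  fixes k d :: nat
  assumes "bij_betw \<sigma> {0..<k} I" and "k \<le> d"
  shows "(\<Sum>j<d. if j < k then g (\<sigma> j) else 0) = (\<Sum>i\<in>I. g i)"
proof -
  have "(\<Sum>j<d. if j < k then g (\<sigma> j) else 0) = (\<Sum>j<k. g (\<sigma> j))"
    using assms(2) by (intro sum.mono_neutral_cong_right) auto
  also have "\<dots> = (\<Sum>i\<in>I. g i)"
    unfolding lessThan_atLeast0 by (rule sum.reindex_bij_betw[OF assms(1)])
  finally show ?thesis .
qed

lemma schatten_scaled_orthogonal_cols:
  fixes Y :: "real mat" and y :: "nat \<Rightarrow> real vec"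
  assumes Y: "Y \<in> carrier_mat r d" and \<sigma>: "bij_betw \<sigma> {0..<k} I" and "k \<le> d"
    and cols: "\<And>j. j < d \<Longrightarrow> col Y j = (if j < k then c (\<sigma> j) \<cdot>\<^sub>v y (\<sigma> j) else 0\<^sub>v r)"
    and y: "\<And>i. i \<in> I \<Longrightarrow> y i \<in> carrier_vec r"
    and orth: "\<And>i j. i \<in> I \<Longrightarrow> j \<in> I \<Longrightarrow> y i \<bullet> y j = (if i = j then w j else 0)"
    and w: "\<And>i. i \<in> I \<Longrightarrow> w i \<ge> 0"
  shows "schatten q Y = (\<Sum>i\<in>I. (c i * c i * w i) powr (q / 2)) powr (1 / q)"
proof -
  have \<sigma>I: "j < k \<Longrightarrow> \<sigma> j \<in> I" for j using bij_betwE[OF \<sigma>] by simp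
  have \<sigma>_inj: "i < k \<Longrightarrow> j < k \<Longrightarrow> \<sigma> i = \<sigma> j \<longleftrightarrow> i = j" for i j
    using inj_on_eq_iff[OF bij_betw_imp_inj_on[OF \<sigma>]] by simp
  have "schatten q Y
      = (\<Sum>j<d. (if j < k then c (\<sigma> j) * c (\<sigma> j) * w (\<sigma> j) else 0) powr (q / 2)) powr (1 / q)"
  proof (rule schatten_orthogonal_cols[OF Y])
    fix i j assume ij: "i < d" "j < d"
    show "col Y i \<bullet> col Y j = (if i = j then (if j < k then c (\<sigma> j) * c (\<sigma> j) * w (\<sigma> j) else 0) else 0)"
    proof (cases "i < k \<and> j < k")
      case True
      then have "y (\<sigma> i) \<in> carrier_vec r" "y (\<sigma> j) \<in> carrier_vec r" using y \<sigma>I by auto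
      then show ?thesis
        using True ij orth[OF \<sigma>I \<sigma>I] \<sigma>_inj by (simp add: cols)
    qed (use ij y \<sigma>I in \<open>auto simp: cols\<close>)
  qed (use \<sigma>I w in simp)
  also have "(\<Sum>j<d. (if j < k then c (\<sigma> j) * c (\<sigma> j) * w (\<sigma> j) else 0) powr (q / 2))
      = (\<Sum>j<d. if j < k then (c (\<sigma> j) * c (\<sigma> j) * w (\<sigma> j)) powr (q / 2) else 0)"
    by (intro sum.cong) auto
  also have "\<dots> = (\<Sum>i\<in>I. (c i * c i * w i) powr (q / 2))"
    by (rule sum_reindex_bij_betw_prefix[OF \<sigma> \<open>k \<le> d\<close>])
  finally show ?thesis .
qed

lemma holder_inequality_sum:
  fixes a b :: "'i \<Rightarrow> real"
  assumes S: "finite S" and a: "\<And>i. i \<in> S \<Longrightarrow> a i \<ge> 0" and b: "\<And>i. i \<in> S \<Longrightarrow> b i \<ge> 0"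
    and P: "P > 1" and Q: "Q > 1" and PQ: "1/P + 1/Q = 1"
  shows "(\<Sum>i\<in>S. a i * b i) \<le> (\<Sum>i\<in>S. a i powr P) powr (1/P) * (\<Sum>i\<in>S. b i powr Q) powr (1/Q)"
proof -
  define SA where "SA = (\<Sum>i\<in>S. a i powr P)"
  define SB where "SB = (\<Sum>i\<in>S. b i powr Q)"
  define A where "A = SA powr (1/P)"
  define B where "B = SB powr (1/Q)"
  have SA0: "SA \<ge> 0" unfolding SA_def by (intro sum_nonneg) auto
  have SB0: "SB \<ge> 0" unfolding SB_def by (intro sum_nonneg) auto
  show ?thesis
  proof (cases "SA = 0 \<or> SB = 0")
    case True
    then have "\<forall>i\<in>S. a i * b i = 0"
    proof
      assume "SA = 0"
      then have "\<forall>i\<in>S. a i powr P = 0" unfolding SA_def using S by (subst (asm) sum_nonneg_eq_0_iff) auto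
      then show ?thesis by simp
    next
      assume "SB = 0"
      then have "\<forall>i\<in>S. b i powr Q = 0" unfolding SB_def using S by (subst (asm) sum_nonneg_eq_0_iff) auto
      then show ?thesis by simp
    qed
    then have "(\<Sum>i\<in>S. a i * b i) = 0" by simp
    then show ?thesis using SA0 SB0 unfolding SA_def[symmetric] SB_def[symmetric] by simp
  next
    case False
    then have SAp: "SA > 0" and SBp: "SB > 0" using SA0 SB0 by auto
    then have Ap: "A > 0" and Bp: "B > 0" by (auto simp: A_def B_def)
    have AP: "A powr P = SA" using SAp P by (simp add: A_def powr_powr)
    have BQ: "B powr Q = SB" using SBp Q by (simp add: B_def powr_powr)
    have "(\<Sum>i\<in>S. (a i / A) * (b i / B)) \<le> (\<Sum>i\<in>S. (a i / A) powr P / P + (b i / B) powr Q / Q)"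
      by (intro sum_mono Youngs_inequality) (use P Q PQ a b Ap Bp in auto)
    also have "\<dots> = (\<Sum>i\<in>S. a i powr P) / A powr P / P + (\<Sum>i\<in>S. b i powr Q) / B powr Q / Q"
      using a b Ap Bp by (simp add: sum.distrib powr_divide sum_divide_distrib)
    also have "\<dots> = 1" using AP BQ SAp SBp PQ by (simp add: SA_def SB_def)
    finally have "(\<Sum>i\<in>S. a i * b i) / (A * B) \<le> 1"
      by (simp add: sum_divide_distrib)
    then show ?thesis using Ap Bp by (simp add: A_def B_def SA_def SB_def field_simps)
  qed
qed

lemma holder_inequality_sum_powr:
  fixes a b :: "'i \<Rightarrow> real"
  assumes K: "finite K" and a: "\<And>k. k \<in> K \<Longrightarrow> a k \<ge> 0" and b: "\<And>k. k \<in> K \<Longrightarrow> b k \<ge> 0"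
    and p: "p > 0" and q1: "q1 > 0" and q2: "q2 > 0" and pq: "1/q1 + 1/q2 = 1/p"
  shows "(\<Sum>k\<in>K. (a k * b k) powr p)
    \<le> (\<Sum>k\<in>K. a k powr q1) powr (p / q1) * (\<Sum>k\<in>K. b k powr q2) powr (p / q2)"
proof -
  have P: "q1 / p > 1" and Q: "q2 / p > 1" and PQ: "1 / (q1 / p) + 1 / (q2 / p) = 1"
  proof -
    have sum1: "p / q1 + p / q2 = 1" using pq p by (simp add: field_simps)
    moreover have "p / q1 > 0" "p / q2 > 0" using p q1 q2 by auto
    ultimately have "p / q1 < 1" "p / q2 < 1" by linarith+
    then show "q1 / p > 1" "q2 / p > 1" using p q1 q2 by (simp_all add: field_simps)
    show "1 / (q1 / p) + 1 / (q2 / p) = 1" using sum1 by simp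
  qed
  have "(\<Sum>k\<in>K. (a k * b k) powr p) = (\<Sum>k\<in>K. a k powr p * b k powr p)"
    using a b by (intro sum.cong refl) (simp add: powr_mult)
  also have "\<dots> \<le> (\<Sum>k\<in>K. (a k powr p) powr (q1 / p)) powr (1 / (q1 / p))
      * (\<Sum>k\<in>K. (b k powr p) powr (q2 / p)) powr (1 / (q2 / p))"
    by (rule holder_inequality_sum) (use K P Q PQ in auto)
  also have "\<dots> = (\<Sum>k\<in>K. a k powr q1) powr (p / q1) * (\<Sum>k\<in>K. b k powr q2) powr (p / q2)"
    using p by (simp add: powr_powr)
  finally show ?thesis .
qed

lemma convex_powr_weighted_sum:
  fixes w x :: "'i \<Rightarrow> real"
  assumes S: "finite S" and w: "\<And>i. i \<in> S \<Longrightarrow> w i \<ge> 0" and x: "\<And>i. i \<in> S \<Longrightarrow> x i \<ge> 0"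
    and sw: "(\<Sum>i\<in>S. w i) = 1" and r: "r \<ge> 1"
  shows "(\<Sum>i\<in>S. w i * x i) powr r \<le> (\<Sum>i\<in>S. w i * x i powr r)"
proof (cases "r = 1")
  case True
  have "(\<Sum>i\<in>S. w i * x i) \<ge> 0" using w x by (intro sum_nonneg) auto
  then show ?thesis using True x by (simp add: powr_one_gt_zero_iff)
next
  case False
  then have r1: "r > 1" using r by simp
  define P where "P = r / (r - 1)"
  have P1: "P > 1" using r1 by (simp add: P_def field_simps)
  have PQ: "1/P + 1/r = 1" using r1 by (simp add: P_def field_simps)
  have "(\<Sum>i\<in>S. w i * x i) = (\<Sum>i\<in>S. (w i powr (1/P)) * (w i powr (1/r) * x i))"
  proof (intro sum.cong refl)
    fix i assume i: "i \<in> S"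
    show "w i * x i = w i powr (1/P) * (w i powr (1/r) * x i)"
    proof (cases "w i = 0")
      case False
      then have "w i powr (1/P) * w i powr (1/r) = w i" using w[OF i] PQ by (simp add: powr_add[symmetric])
      then show ?thesis by (metis mult.assoc)
    qed simp
  qed
  also have "\<dots> \<le> (\<Sum>i\<in>S. (w i powr (1/P)) powr P) powr (1/P) * (\<Sum>i\<in>S. (w i powr (1/r) * x i) powr r) powr (1/r)"
    by (rule holder_inequality_sum) (use S w x P1 r1 PQ in auto)
  also have "(\<Sum>i\<in>S. (w i powr (1/P)) powr P) = 1"
    using sw w P1 by (simp add: powr_powr)
  also have "(\<Sum>i\<in>S. (w i powr (1/r) * x i) powr r) = (\<Sum>i\<in>S. w i * x i powr r)"
    using w x r1 by (intro sum.cong refl) (simp add: powr_mult powr_powr)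
  finally have le: "(\<Sum>i\<in>S. w i * x i) \<le> (\<Sum>i\<in>S. w i * x i powr r) powr (1/r)" by simp
  have nn: "(\<Sum>i\<in>S. w i * x i) \<ge> 0" using w x by (intro sum_nonneg) auto
  have nn2: "(\<Sum>i\<in>S. w i * x i powr r) \<ge> 0" using w by (intro sum_nonneg) auto
  have "(\<Sum>i\<in>S. w i * x i) powr r \<le> ((\<Sum>i\<in>S. w i * x i powr r) powr (1/r)) powr r"
    by (rule powr_mono2) (use nn le r1 in auto)
  also have "\<dots> = (\<Sum>i\<in>S. w i * x i powr r)" using nn2 r1 by (simp add: powr_powr)
  finally show ?thesis .
qed

lemma concave_powr_weighted_sum:
  fixes w x :: "'i \<Rightarrow> real"
  assumes S: "finite S" and w: "\<And>i. i \<in> S \<Longrightarrow> w i \<ge> 0" and x: "\<And>i. i \<in> S \<Longrightarrow> x i \<ge> 0"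
    and sw: "(\<Sum>i\<in>S. w i) = 1" and s0: "s > 0" and s1: "s \<le> 1"
  shows "(\<Sum>i\<in>S. w i * x i powr s) \<le> (\<Sum>i\<in>S. w i * x i) powr s"
proof -
  have "(\<Sum>i\<in>S. w i * x i powr s) powr (1/s) \<le> (\<Sum>i\<in>S. w i * (x i powr s) powr (1/s))"
    by (rule convex_powr_weighted_sum) (use S w x sw s0 s1 in auto)
  also have "\<dots> = (\<Sum>i\<in>S. w i * x i)" using x s0 by (intro sum.cong refl) (simp add: powr_powr)
  finally have le: "(\<Sum>i\<in>S. w i * x i powr s) powr (1/s) \<le> (\<Sum>i\<in>S. w i * x i)" .
  have nn: "(\<Sum>i\<in>S. w i * x i powr s) \<ge> 0" using w by (intro sum_nonneg) auto
  have "(\<Sum>i\<in>S. w i * x i powr s) = ((\<Sum>i\<in>S. w i * x i powr s) powr (1/s)) powr s"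
    using nn s0 by (simp add: powr_powr)
  also have "\<dots> \<le> (\<Sum>i\<in>S. w i * x i) powr s"
    by (rule powr_mono2) (use le s0 in auto)
  finally show ?thesis .
qed

section \<open>The Hoelder inequality when one exponent is at least two\<close>

lemma sum_gram_norm_powr_le:
  fixes U :: "real mat"
  assumes U: "U \<in> carrier_mat m d" and G: "orth_mat d G" and H: "orth_mat d H"
    and UU: "transpose_mat U * U = H * diagonal d \<nu> * transpose_mat H" and \<nu>: "\<forall>i<d. \<nu> i \<ge> 0"
    and r: "r \<ge> 1"
  shows "(\<Sum>k<d. ((U *\<^sub>v col G k) \<bullet> (U *\<^sub>v col G k)) powr r) \<le> (\<Sum>i<d. \<nu> i powr r)"
proof -
  have Gc: "G \<in> carrier_mat d d" and Hc: "H \<in> carrier_mat d d"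
    using G H by (auto simp: orth_mat_def)
  define w where "w i k = (col H i \<bullet> col G k)\<^sup>2" for i k
  have norm: "(U *\<^sub>v col G k) \<bullet> (U *\<^sub>v col G k) = (\<Sum>i<d. w i k * \<nu> i)" if "k < d" for k
    using that U Gc spectral_bilinear[OF H, of "col G k" "col G k" \<nu>]
    by (simp add: scalar_prod_mult_mat_vec_gram UU w_def power2_eq_square mult_ac)
  have col_sum: "(\<Sum>i<d. w i k) = 1" if "k < d" for k
    using that Gc parseval_orth_mat[OF H, of "col G k"] orth_mat_cols[OF G that that]
    by (simp add: w_def)
  have row_sum: "(\<Sum>k<d. w i k) = 1" if "i < d" for i
  proof -
    have "(\<Sum>k<d. w i k) = (\<Sum>k<d. (col G k \<bullet> col H i)\<^sup>2)"
      unfolding w_def using Gc Hc that by (intro sum.cong refl) (simp add: comm_scalar_prod[of _ d])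
    then show ?thesis
      using that Hc parseval_orth_mat[OF G, of "col H i"] orth_mat_cols[OF H that that] by simp
  qed
  have "(\<Sum>k<d. ((U *\<^sub>v col G k) \<bullet> (U *\<^sub>v col G k)) powr r) = (\<Sum>k<d. (\<Sum>i<d. w i k * \<nu> i) powr r)"
    by (simp add: norm)
  also have "\<dots> \<le> (\<Sum>k<d. \<Sum>i<d. w i k * \<nu> i powr r)"
    by (intro sum_mono convex_powr_weighted_sum) (use \<nu> r col_sum in \<open>auto simp: w_def\<close>)
  also have "\<dots> = (\<Sum>i<d. (\<Sum>k<d. w i k) * \<nu> i powr r)"
    by (subst sum.swap) (simp add: sum_distrib_right)
  also have "\<dots> = (\<Sum>i<d. \<nu> i powr r)"
    by (simp add: row_sum)
  finally show ?thesis .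
qed

lemma sum_eigenvalues_powr_le:
  fixes X :: "real mat" and e :: "nat \<Rightarrow> real vec"
  assumes X: "X \<in> carrier_mat m n" and C: "orth_mat n C"
    and XX: "transpose_mat X * X = C * diagonal n \<mu> * transpose_mat C" and \<mu>: "\<forall>i<n. \<mu> i \<ge> 0"
    and K: "finite K" and e: "\<And>k. k \<in> K \<Longrightarrow> e k \<in> carrier_vec n"
    and e1: "\<And>k. k \<in> K \<Longrightarrow> e k \<bullet> e k = 1"
    and cover: "\<And>i. i < n \<Longrightarrow> \<mu> i > 0 \<Longrightarrow> (\<Sum>k\<in>K. (col C i \<bullet> e k)\<^sup>2) = 1"
    and s: "0 < s" "s \<le> 1"
  shows "(\<Sum>i<n. \<mu> i powr s) \<le> (\<Sum>k\<in>K. ((X *\<^sub>v e k) \<bullet> (X *\<^sub>v e k)) powr s)"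
proof -
  define w where "w i k = (col C i \<bullet> e k)\<^sup>2" for i k
  have norm: "(X *\<^sub>v e k) \<bullet> (X *\<^sub>v e k) = (\<Sum>i<n. w i k * \<mu> i)" if "k \<in> K" for k
    using that X e[OF that] spectral_bilinear[OF C e[OF that] e[OF that], of \<mu>]
    by (simp add: scalar_prod_mult_mat_vec_gram XX w_def power2_eq_square mult_ac)
  have col_sum: "(\<Sum>i<n. w i k) = 1" if "k \<in> K" for k
    unfolding w_def using parseval_orth_mat[OF C e[OF that]] e1[OF that] by simp
  have "(\<Sum>i<n. \<mu> i powr s) = (\<Sum>i<n. (\<Sum>k\<in>K. w i k) * \<mu> i powr s)"
  proof (intro sum.cong refl)
    fix i assume "i \<in> {..<n}"
    then show "\<mu> i powr s = (\<Sum>k\<in>K. w i k) * \<mu> i powr s"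
      using cover[of i] \<mu> by (cases "\<mu> i > 0") (auto simp: w_def)
  qed
  also have "\<dots> = (\<Sum>k\<in>K. \<Sum>i<n. w i k * \<mu> i powr s)"
    by (subst sum.swap) (simp add: sum_distrib_right)
  also have "\<dots> \<le> (\<Sum>k\<in>K. (\<Sum>i<n. w i k * \<mu> i) powr s)"
    by (intro sum_mono concave_powr_weighted_sum) (use \<mu> s col_sum in \<open>auto simp: w_def\<close>)
  also have "\<dots> = (\<Sum>k\<in>K. ((X *\<^sub>v e k) \<bullet> (X *\<^sub>v e k)) powr s)"
    by (intro sum.cong refl) (simp add: norm)
  finally show ?thesis .
qed

(* Only meaningful for tau k > 0; for tau k = 0 division by zero makes it the zero vector. *)
definition left_singular_vec :: "real mat \<Rightarrow> real mat \<Rightarrow> (nat \<Rightarrow> real) \<Rightarrow> nat \<Rightarrow> real vec" where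
  "left_singular_vec V G \<tau> k = (1 / sqrt (\<tau> k)) \<cdot>\<^sub>v (V *\<^sub>v col G k)"

context
  fixes V G :: "real mat" and \<tau> :: "nat \<Rightarrow> real" and n d :: nat
  assumes V: "V \<in> carrier_mat n d" and G: "orth_mat d G"
    and VV: "transpose_mat V * V = G * diagonal d \<tau> * transpose_mat G" and \<tau>: "\<forall>k<d. \<tau> k \<ge> 0"
begin

lemma left_singular_vec_carrier: "k < d \<Longrightarrow> left_singular_vec V G \<tau> k \<in> carrier_vec n"
  using V orth_mat_carrier[OF G] by (simp add: left_singular_vec_def)

lemma left_singular_vec_unit:
  assumes "k < d" and "\<tau> k > 0"
  shows "left_singular_vec V G \<tau> k \<bullet> left_singular_vec V G \<tau> k = 1"
  using assms V orth_mat_carrier[OF G] gram_spectral_cols[OF V G VV assms(1) assms(1)]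
  by (simp add: left_singular_vec_def)

lemma mult_left_singular_vec:
  assumes U: "U \<in> carrier_mat m d" and k: "k < d" and "\<tau> k > 0"
  shows "(U * transpose_mat V) *\<^sub>v left_singular_vec V G \<tau> k = sqrt (\<tau> k) \<cdot>\<^sub>v (U *\<^sub>v col G k)"
proof -
  have gk: "col G k \<in> carrier_vec d" using orth_mat_carrier[OF G] k by simp
  have "(U * transpose_mat V) *\<^sub>v (V *\<^sub>v col G k) = U *\<^sub>v ((transpose_mat V * V) *\<^sub>v col G k)"
    using U V gk by simp
  also have "\<dots> = \<tau> k \<cdot>\<^sub>v (U *\<^sub>v col G k)"
    unfolding VV spectral_eigenvector[OF G k] using mult_mat_vec[OF U gk] by simp
  finally show ?thesis
    using assms V gk by (simp add: left_singular_vec_def mult_mat_vec[of _ m n] smult_smult_assoc real_div_sqrt)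
qed

lemma parseval_left_singular_vecs:
  assumes z: "z \<in> carrier_vec d"
  shows "(\<Sum>k | k < d \<and> \<tau> k > 0. ((V *\<^sub>v z) \<bullet> left_singular_vec V G \<tau> k)\<^sup>2) = (V *\<^sub>v z) \<bullet> (V *\<^sub>v z)"
proof -
  have gk: "k < d \<Longrightarrow> col G k \<in> carrier_vec d" for k using orth_mat_carrier[OF G] by simp
  have summand: "((V *\<^sub>v z) \<bullet> left_singular_vec V G \<tau> k)\<^sup>2 = \<tau> k * (col G k \<bullet> z)\<^sup>2"
    if "k < d" "\<tau> k > 0" for k
  proof -
    have "(V *\<^sub>v z) \<bullet> (V *\<^sub>v col G k) = \<tau> k * (col G k \<bullet> z)"
      using V z gk[OF that(1)]
      by (simp add: scalar_prod_mult_mat_vec_gram VV spectral_eigenvector[OF G that(1)] comm_scalar_prod[of _ d])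
    then show ?thesis
      using that V z gk[OF that(1)]
      by (simp add: left_singular_vec_def power_mult_distrib power2_eq_square)
  qed
  have "(\<Sum>k | k < d \<and> \<tau> k > 0. ((V *\<^sub>v z) \<bullet> left_singular_vec V G \<tau> k)\<^sup>2)
      = (\<Sum>k | k < d \<and> \<tau> k > 0. \<tau> k * (col G k \<bullet> z)\<^sup>2)"
    by (intro sum.cong refl) (simp add: summand)
  also have "\<dots> = (\<Sum>k<d. \<tau> k * (col G k \<bullet> z)\<^sup>2)"
    by (rule sum.mono_neutral_left) (use \<tau> in \<open>auto simp: order_le_less\<close>)
  also have "\<dots> = (V *\<^sub>v z) \<bullet> (V *\<^sub>v z)"
    using V z spectral_bilinear[OF G z z, of \<tau>]
    by (simp add: scalar_prod_mult_mat_vec_gram VV power2_eq_square mult_ac)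
  finally show ?thesis .
qed

end

lemma sum_eigenvalues_powr_le_factors:
  fixes U V :: "real mat"
  assumes U: "U \<in> carrier_mat m d" and V: "V \<in> carrier_mat n d"
    and G: "orth_mat d G" and VV: "transpose_mat V * V = G * diagonal d \<tau> * transpose_mat G"
    and \<tau>: "\<forall>k<d. \<tau> k \<ge> 0" and C: "orth_mat n C"
    and XX: "transpose_mat (U * transpose_mat V) * (U * transpose_mat V) = C * diagonal n \<mu> * transpose_mat C"
    and \<mu>: "\<forall>i<n. \<mu> i \<ge> 0" and s: "0 < s" "s \<le> 1"
  shows "(\<Sum>i<n. \<mu> i powr s) \<le> (\<Sum>k | k < d \<and> \<tau> k > 0. (\<tau> k * ((U *\<^sub>v col G k) \<bullet> (U *\<^sub>v col G k))) powr s)"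
proof -
  define X where "X = U * transpose_mat V"
  have Xc: "X \<in> carrier_mat m n" using U V by (simp add: X_def)
  have Gc: "G \<in> carrier_mat d d" and Cc: "C \<in> carrier_mat n n"
    using G C by (auto simp: orth_mat_def)
  define K where "K = {k. k < d \<and> \<tau> k > 0}"
  define e where "e = left_singular_vec V G \<tau>"
  have cover: "(\<Sum>k\<in>K. (col C i \<bullet> e k)\<^sup>2) = 1" if i: "i < n" and "\<mu> i > 0" for i
  proof -
    have ci: "col C i \<in> carrier_vec n" using Cc i by simp
    have eig: "(transpose_mat X * X) *\<^sub>v col C i = \<mu> i \<cdot>\<^sub>v col C i"
      unfolding X_def XX by (rule spectral_eigenvector[OF C i])
    obtain z where z: "z \<in> carrier_vec d" and "col C i = V *\<^sub>v z"
      using gram_mult_transpose_eigvec_in_range[OF U V ci eig[unfolded X_def]] \<open>\<mu> i > 0\<close> by auto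
    then show ?thesis
      using parseval_left_singular_vecs[OF V G VV \<tau> z] orth_mat_cols[OF C i i]
      by (simp add: K_def e_def)
  qed
  have Xe: "(X *\<^sub>v e k) \<bullet> (X *\<^sub>v e k) = \<tau> k * ((U *\<^sub>v col G k) \<bullet> (U *\<^sub>v col G k))" if k: "k \<in> K" for k
  proof -
    have "X *\<^sub>v e k = sqrt (\<tau> k) \<cdot>\<^sub>v (U *\<^sub>v col G k)"
      using k mult_left_singular_vec[OF V G VV \<tau> U] by (simp add: K_def X_def e_def)
    then show ?thesis using k U Gc by (simp add: K_def)
  qed
  have "(\<Sum>i<n. \<mu> i powr s) \<le> (\<Sum>k\<in>K. ((X *\<^sub>v e k) \<bullet> (X *\<^sub>v e k)) powr s)"
  proof (rule sum_eigenvalues_powr_le[OF Xc C XX[folded X_def] \<mu>])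
    show "e k \<in> carrier_vec n" if "k \<in> K" for k
      using that left_singular_vec_carrier[OF V G VV \<tau>] by (simp add: K_def e_def)
    show "e k \<bullet> e k = 1" if "k \<in> K" for k
      using that left_singular_vec_unit[OF V G VV \<tau>] by (simp add: K_def e_def)
  qed (use cover s in \<open>auto simp: K_def\<close>)
  then show ?thesis by (simp add: Xe K_def)
qed

lemma schatten_holder_large_exponent:
  fixes U V :: "real mat"
  assumes U: "U \<in> carrier_mat m d" and V: "V \<in> carrier_mat n d"
    and q1: "q1 \<ge> 2" and q2: "q2 > 0" and p: "p > 0" and pq: "1/q1 + 1/q2 = 1/p" and p2: "p \<le> 2"
  shows "schatten p (U * transpose_mat V) \<le> schatten q1 U * schatten q2 V"
proof -
  define X where "X = U * transpose_mat V"
  have Xc: "X \<in> carrier_mat m n" using U V by (simp add: X_def)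
  obtain H \<nu> where H: "orth_mat d H" and UU: "transpose_mat U * U = H * diagonal d \<nu> * transpose_mat H"
    and \<nu>: "\<forall>i<d. \<nu> i \<ge> 0" using gram_spectral[OF U] by blast
  obtain G \<tau> where G: "orth_mat d G" and VV: "transpose_mat V * V = G * diagonal d \<tau> * transpose_mat G"
    and \<tau>: "\<forall>i<d. \<tau> i \<ge> 0" using gram_spectral[OF V] by blast
  obtain C \<mu> where C: "orth_mat n C" and XX: "transpose_mat X * X = C * diagonal n \<mu> * transpose_mat C"
    and \<mu>: "\<forall>i<n. \<mu> i \<ge> 0" using gram_spectral[OF Xc] by blast
  define K where "K = {k. k < d \<and> \<tau> k > 0}"
  define N where "N k = (U *\<^sub>v col G k) \<bullet> (U *\<^sub>v col G k)" for k
  have N0: "N k \<ge> 0" for k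
    by (simp add: N_def scalar_prod_self_nonneg)
  have "(\<Sum>i<n. \<mu> i powr (p / 2)) \<le> (\<Sum>k\<in>K. (\<tau> k * N k) powr (p / 2))"
    using sum_eigenvalues_powr_le_factors[OF U V G VV \<tau> C XX[unfolded X_def] \<mu>] p p2
    by (simp add: K_def N_def)
  also have "\<dots> = (\<Sum>k\<in>K. (sqrt (\<tau> k) * sqrt (N k)) powr p)"
    using \<tau> N0 by (intro sum.cong refl) (simp add: K_def real_sqrt_mult[symmetric] sqrt_powr)
  also have "\<dots> \<le> (\<Sum>k\<in>K. sqrt (\<tau> k) powr q2) powr (p / q2) * (\<Sum>k\<in>K. sqrt (N k) powr q1) powr (p / q1)"
    using holder_inequality_sum_powr[of K "\<lambda>k. sqrt (\<tau> k)" "\<lambda>k. sqrt (N k)" p q2 q1] p q1 q2 pq N0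
    by (auto simp: K_def add.commute)
  also have "\<dots> \<le> (\<Sum>k<d. \<tau> k powr (q2 / 2)) powr (p / q2) * (\<Sum>k<d. \<nu> k powr (q1 / 2)) powr (p / q1)"
  proof (intro mult_mono powr_mono2 sum_nonneg)
    show "(\<Sum>k\<in>K. sqrt (\<tau> k) powr q2) \<le> (\<Sum>k<d. \<tau> k powr (q2 / 2))"
      using \<tau> by (auto simp: K_def sqrt_powr intro!: sum_mono2)
    have "(\<Sum>k\<in>K. sqrt (N k) powr q1) \<le> (\<Sum>k<d. N k powr (q1 / 2))"
      using N0 by (auto simp: K_def sqrt_powr intro!: sum_mono2)
    also have "\<dots> \<le> (\<Sum>k<d. \<nu> k powr (q1 / 2))"
      unfolding N_def by (rule sum_gram_norm_powr_le[OF U G H UU \<nu>]) (use q1 in simp)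
    finally show "(\<Sum>k\<in>K. sqrt (N k) powr q1) \<le> (\<Sum>k<d. \<nu> k powr (q1 / 2))" .
  qed (use p q1 q2 in auto)
  finally have main: "(\<Sum>i<n. \<mu> i powr (p / 2))
      \<le> (\<Sum>k<d. \<tau> k powr (q2 / 2)) powr (p / q2) * (\<Sum>k<d. \<nu> k powr (q1 / 2)) powr (p / q1)" .
  have "schatten p X \<le> ((\<Sum>k<d. \<tau> k powr (q2 / 2)) powr (p / q2)
      * (\<Sum>k<d. \<nu> k powr (q1 / 2)) powr (p / q1)) powr (1 / p)"
    unfolding schatten_eq_sum[OF Xc C XX \<mu>] by (rule powr_mono2) (use main p in \<open>auto intro: sum_nonneg\<close>)
  also have "\<dots> = schatten q1 U * schatten q2 V"
    using p unfolding schatten_eq_sum[OF U H UU \<nu>] schatten_eq_sum[OF V G VV \<tau>]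
    by (simp add: powr_mult powr_powr)
  finally show ?thesis unfolding X_def .
qed

section \<open>The general Hoelder inequality\<close>

lemma gram_factorization:
  fixes U :: "real mat"
  assumes U: "U \<in> carrier_mat m d" and H: "orth_mat d H"
    and UU: "transpose_mat U * U = H * diagonal d \<nu> * transpose_mat H" and \<nu>: "\<forall>i<d. \<nu> i \<ge> 0"
  obtains U' W where "U' \<in> carrier_mat m d" and "W \<in> carrier_mat d d" and "U = U' * W"
    and "transpose_mat U' * U' = 1\<^sub>m d * diagonal d (\<lambda>i. \<nu> i powr \<gamma>) * transpose_mat (1\<^sub>m d)"
    and "transpose_mat W * W = H * diagonal d (\<lambda>i. \<nu> i powr (1 - \<gamma>)) * transpose_mat H"
proof -
  have Hc: "H \<in> carrier_mat d d" using H by (rule orth_mat_carrier)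
  define D where "D j = (if \<nu> j > 0 then \<nu> j powr ((\<gamma> - 1) / 2) else 0)" for j
  define E where "E j = \<nu> j powr ((1 - \<gamma>) / 2)" for j
  define U' where "U' = U * H * diagonal d D"
  define W where "W = diagonal d E * transpose_mat H"
  have U': "U' \<in> carrier_mat m d" and W: "W \<in> carrier_mat d d"
    using U Hc by (auto simp: U'_def W_def)
  have DE: "D j * E j = 1" if "\<nu> j > 0" for j
  proof -
    have "D j * E j = \<nu> j powr ((\<gamma> - 1) / 2 + (1 - \<gamma>) / 2)"
      using that by (simp add: D_def E_def powr_add)
    also have "(\<gamma> - 1) / 2 + (1 - \<gamma>) / 2 = 0" by (simp add: field_simps)
    finally show ?thesis using that by simp
  qed
  have "U' * W = U * H * diagonal d (\<lambda>j. D j * E j) * transpose_mat H"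
    unfolding U'_def W_def by (rule mult_diagonal_diagonal_mult) (use U Hc in auto)
  also have "\<dots> = U * (H * transpose_mat H)"
    using mult_diagonal_eq_on_gram_support[OF U H UU \<nu>] DE U Hc by simp
  finally have "U = U' * W"
    using U by (simp add: orth_mat_right_inverse[OF H])
  moreover have "transpose_mat U' * U' = 1\<^sub>m d * diagonal d (\<lambda>i. \<nu> i powr \<gamma>) * transpose_mat (1\<^sub>m d)"
  proof (rule gram_diagonal_of_orthogonal_cols[OF U'])
    fix i j assume ij: "i < d" "j < d"
    have "D j * D j * \<nu> j = \<nu> j powr \<gamma>"
    proof (cases "\<nu> j > 0")
      case True
      have "\<nu> j powr \<gamma> = \<nu> j powr (\<gamma> - 1) * \<nu> j powr 1"
        by (subst powr_add[symmetric]) simp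
      then show ?thesis using True by (simp add: D_def powr_half_mult_self)
    next
      case False
      then have "\<nu> j = 0" using \<nu> ij(2) by fastforce
      then show ?thesis by (simp add: D_def)
    qed
    moreover have "col U' k = D k \<cdot>\<^sub>v (U *\<^sub>v col H k)" if "k < d" for k
      unfolding U'_def col_mult_diagonal[OF mult_carrier_mat[OF U Hc] that] col_mult2[OF U Hc that] ..
    ultimately show "col U' i \<bullet> col U' j = (if i = j then \<nu> j powr \<gamma> else 0)"
      using ij U Hc gram_spectral_cols[OF U H UU ij] by simp
  qed
  moreover have "transpose_mat W * W = H * diagonal d (\<lambda>i. \<nu> i powr (1 - \<gamma>)) * transpose_mat H"
    using gram_diagonal_mult_transpose[OF Hc, of E] by (simp add: W_def E_def powr_half_mult_self)
  ultimately show ?thesis using that U' W by blast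
qed

lemma schatten_factorization:
  fixes U :: "real mat"
  assumes U: "U \<in> carrier_mat m d" and p: "p > 0" and q: "q > 0" and r: "r > 0"
    and pqr: "1 / q + 1 / r = 1 / p"
  obtains U' W where "U' \<in> carrier_mat m d" and "W \<in> carrier_mat d d" and "U = U' * W"
    and "schatten p U = schatten q U' * schatten r W"
proof -
  obtain H \<nu> where H: "orth_mat d H" and UU: "transpose_mat U * U = H * diagonal d \<nu> * transpose_mat H"
    and \<nu>: "\<forall>i<d. \<nu> i \<ge> 0" using gram_spectral[OF U] by blast
  obtain U' W where U': "U' \<in> carrier_mat m d" and W: "W \<in> carrier_mat d d" and UW: "U = U' * W"
    and G1: "transpose_mat U' * U' = 1\<^sub>m d * diagonal d (\<lambda>i. \<nu> i powr (p / q)) * transpose_mat (1\<^sub>m d)"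
    and G2: "transpose_mat W * W = H * diagonal d (\<lambda>i. \<nu> i powr (1 - p / q)) * transpose_mat H"
    by (rule gram_factorization[OF U H UU \<nu>])
  define A where "A = (\<Sum>i<d. \<nu> i powr (p / 2))"
  have "1 - p / q = p / r" using pqr p q r by (simp add: field_simps)
  then have "schatten q U' = A powr (1 / q)" "schatten r W = A powr (1 / r)"
    using schatten_eq_sum[OF U' orth_mat_one G1] schatten_eq_sum[OF W H G2] \<nu> q r
    by (simp_all add: A_def powr_powr)
  moreover have "schatten p U = A powr (1 / q + 1 / r)"
    using schatten_eq_sum[OF U H UU \<nu>] pqr by (simp add: A_def)
  ultimately show ?thesis
    using that U' W UW by (simp add: powr_add)
qed

lemma holder_exponent_split:
  fixes p p1 p2 :: real
  assumes p: "p > 0" and p1: "p1 > 0" and p2: "p2 > 0" and pp: "1/p1 + 1/p2 = 1/p" and "p1 < 2"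
  obtains q1 q2 r where "q1 \<ge> 2" and "0 < q2" and "q2 \<le> 2" and "0 < r"
    and "1/q1 + 1/q2 = 1/p" and "1/q1 + 1/r = 1/p1" and "1/p2 + 1/r = 1/q2"
    and "2/q2 = max 1 (2/p - 1)"
proof -
  have "1/p1 > 1/2" using p1 \<open>p1 < 2\<close> by (simp add: field_simps)
  moreover have "1/p2 > 0" using p2 by simp
  ultimately have half: "1/p > 1/2" using pp by linarith
  define c where "c = min (1/2) (1/p - 1/2)"
  have c: "0 < c" "c \<le> 1/2" "c \<le> 1/p - 1/2"
    using half unfolding c_def by linarith+
  have "c < 1/p1" using c(2) \<open>1/p1 > 1/2\<close> by linarith
  show ?thesis
  proof (rule that[of "1/c" "1/(1/p - c)" "1/(1/p1 - c)"])
    show "1/c \<ge> 2" using c by (simp add: field_simps)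
    show "0 < 1/(1/p - c)" "1/(1/p - c) \<le> 2" "0 < 1/(1/p1 - c)"
      using c \<open>c < 1/p1\<close> by (simp_all add: field_simps)
    show "1/(1/c) + 1/(1/(1/p - c)) = 1/p" "1/(1/c) + 1/(1/(1/p1 - c)) = 1/p1"
      "1/p2 + 1/(1/(1/p1 - c)) = 1/(1/(1/p - c))"
      using pp by simp_all
    show "2/(1/(1/p - c)) = max 1 (2/p - 1)"
      by (simp add: c_def min_def max_def field_simps)
  qed
qed

lemma schatten_holder_reduction:
  fixes U V :: "real mat"
  assumes U: "U \<in> carrier_mat m d" and V: "V \<in> carrier_mat n d"
    and p: "0 < p" "p \<le> 2" and p1: "0 < p1" and q1: "q1 \<ge> 2" and q2: "0 < q2" and r: "0 < r"
    and split: "1/q1 + 1/q2 = 1/p" "1/q1 + 1/r = 1/p1"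
    and hyp: "\<And>W. W \<in> carrier_mat d d \<Longrightarrow> schatten q2 (V * transpose_mat W) \<le> schatten p2 V * schatten r W"
  shows "schatten p (U * transpose_mat V) \<le> schatten p1 U * schatten p2 V"
proof -
  obtain U' W where U': "U' \<in> carrier_mat m d" and W: "W \<in> carrier_mat d d"
    and UW: "U = U' * W" and factor: "schatten p1 U = schatten q1 U' * schatten r W"
    using schatten_factorization[OF U p1 _ r split(2)] q1 by auto
  have VW: "V * transpose_mat W \<in> carrier_mat n d" using V W by simp
  have "U * transpose_mat V = U' * transpose_mat (V * transpose_mat W)"
    using U' V W by (simp add: UW transpose_mult[of _ n d _ d] assoc_mult_mat[of _ m d _ d _ n])
  then have "schatten p (U * transpose_mat V) \<le> schatten q1 U' * schatten q2 (V * transpose_mat W)"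
    using schatten_holder_large_exponent[OF U' VW q1 q2] split(1) p by simp
  also have "\<dots> \<le> schatten q1 U' * (schatten p2 V * schatten r W)"
    by (rule mult_left_mono[OF hyp[OF W] schatten_nonneg])
  also have "\<dots> = schatten p1 U * schatten p2 V"
    by (simp add: factor)
  finally show ?thesis .
qed

lemma schatten_holder:
  fixes U V :: "real mat"
  assumes "U \<in> carrier_mat m d" and "V \<in> carrier_mat n d"
    and "0 < p" and "0 < p1" and "0 < p2" and "1/p1 + 1/p2 = 1/p" and "p \<le> 2"
  shows "schatten p (U * transpose_mat V) \<le> schatten p1 U * schatten p2 V"
proof -
  have "schatten p (U * transpose_mat V) \<le> schatten p1 U * schatten p2 V"
    if "U \<in> carrier_mat m d" "V \<in> carrier_mat n d" "0 < p" "0 < p1" "0 < p2"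
      "1/p1 + 1/p2 = 1/p" "p \<le> 2" "2 / p \<le> real N"
    for N p p1 p2 m n d and U V :: "real mat"
    using that
  proof (induction N arbitrary: p p1 p2 m n d U V)
    case 0
    then show ?case by (simp add: field_simps)
  next
    case (Suc N)
    show ?case
    proof (cases "p1 \<ge> 2")
      case True
      then show ?thesis
        using schatten_holder_large_exponent[OF Suc.prems(1,2)] Suc.prems by simp
    next
      case False
      obtain q1 q2 r where q1: "q1 \<ge> 2" and q2: "0 < q2" "q2 \<le> 2" and r: "0 < r"
        and split: "1/q1 + 1/q2 = 1/p" "1/q1 + 1/r = 1/p1" "1/p2 + 1/r = 1/q2"
        and q2N: "2/q2 = max 1 (2/p - 1)"
        using holder_exponent_split[of p p1 p2] Suc.prems False by auto
      have "1/p1 > 1/2" "1/p2 > 0" using Suc.prems False by (simp_all add: field_simps)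
      then have "1/p > 1/2" using Suc.prems(6) by linarith
      then have "2/p > 1" using Suc.prems(3) by (simp add: field_simps)
      then have "N \<ge> 1" "2/p - 1 \<le> real N" using Suc.prems(8) by simp_all
      then have "2 / q2 \<le> real N" using q2N by simp
      then have "schatten q2 (V * transpose_mat W) \<le> schatten p2 V * schatten r W"
        if "W \<in> carrier_mat d d" for W
        using Suc.IH[OF Suc.prems(2) that q2(1) Suc.prems(5) r split(3) q2(2)] by blast
      then show ?thesis
        using schatten_holder_reduction[OF Suc.prems(1,2) _ _ _ q1 q2(1) r split(1,2)] Suc.prems by blast
    qed
  qed
  then show ?thesis using assms by (meson real_nat_ceiling_ge)
qed

section \<open>Attainment\<close>

context vec_space
begin

lemma orthogonal_lin_indpt:
  assumes W: "W \<subseteq> carrier_vec n"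
    and orth: "\<And>v w. v \<in> W \<Longrightarrow> w \<in> W \<Longrightarrow> v \<noteq> w \<Longrightarrow> v \<bullet> w = 0"
    and nz: "\<And>v. v \<in> W \<Longrightarrow> v \<bullet> v \<noteq> 0"
  shows "lin_indpt W"
proof
  assume "lin_dep W"
  then obtain A a v where A: "finite A" "A \<subseteq> W" and lc: "lincomb a A = 0\<^sub>v n"
    and v: "v \<in> A" and av: "a v \<noteq> 0"
    unfolding lin_dep_def by auto
  have Ac: "A \<subseteq> carrier_vec n" using A W by auto
  have vc: "v \<in> carrier_vec n" using v Ac by auto
  have d: "dim_vec (lincomb a A) = n" using lc by simp
  have "v \<bullet> lincomb a A = (\<Sum>i\<in>{0..<n}. v $ i * (\<Sum>x\<in>A. a x * x $ i))"
    unfolding scalar_prod_def d by (intro sum.cong refl) (simp add: lincomb_index[OF _ Ac])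
  also have "\<dots> = (\<Sum>x\<in>A. a x * (\<Sum>i\<in>{0..<n}. v $ i * x $ i))"
    by (simp add: sum_distrib_left sum_distrib_right mult_ac) (rule sum.swap)
  also have "\<dots> = (\<Sum>x\<in>A. a x * (v \<bullet> x))"
    using Ac by (intro sum.cong refl) (auto simp: scalar_prod_def)
  also have "\<dots> = (\<Sum>x\<in>A. if x = v then a v * (v \<bullet> v) else 0)"
    using A orth v by (intro sum.cong refl) auto
  also have "\<dots> = a v * (v \<bullet> v)" using A v by simp
  finally have "a v * (v \<bullet> v) = 0" using lc vc by simp
  then show False using av nz[of v] v A by auto
qed

lemma card_lin_indpt_le_rank:
  assumes A: "A \<in> carrier_mat n nc" and W: "W \<subseteq> span (set (cols A))" and li: "lin_indpt W"
  shows "card W \<le> rank A"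
proof -
  let ?S = "set (cols A)"
  have S: "?S \<subseteq> carrier_vec n" using cols_dim A by blast
  have "vectorspace class_ring (span_vs ?S)"
    using field.field_axioms vectorspace_def submodule_is_module[OF span_is_submodule[OF S]] by metis
  moreover have "LinearCombinations.module.lin_indpt class_ring (span_vs ?S) W"
    using span_li_not_depend(2)[OF W span_is_submodule[OF S]] li by simp
  ultimately show ?thesis
    using vectorspace.li_le_dim(2)[OF _ fin_dim_span_cols[OF A]] W unfolding rank_def by simp
qed

end

lemma card_pos_gram_eigenvalues_le_rank:
  fixes X :: "real mat"
  assumes X: "X \<in> carrier_mat m n" and C: "orth_mat n C"
    and XX: "transpose_mat X * X = C * diagonal n \<mu> * transpose_mat C"
  shows "card {i. i < n \<and> \<mu> i > 0} \<le> vec_space.rank m X"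
proof -
  interpret vs: vec_space "TYPE(real)" m .
  define I where "I = {i. i < n \<and> \<mu> i > 0}"
  define x where "x i = X *\<^sub>v col C i" for i
  have xc: "i < n \<Longrightarrow> x i \<in> carrier_vec m" for i
    using X orth_mat_carrier[OF C] by (simp add: x_def)
  have xx: "i \<in> I \<Longrightarrow> j \<in> I \<Longrightarrow> x i \<bullet> x j = (if i = j then \<mu> j else 0)" for i j
    using gram_spectral_cols[OF X C XX] by (simp add: I_def x_def)
  have inj: "inj_on x I"
  proof (rule inj_onI)
    fix i j assume "i \<in> I" "j \<in> I" "x i = x j"
    then show "i = j" using xx[of i i] xx[of i j] by (auto simp: I_def split: if_splits)
  qed
  have "vs.lin_indpt (x ` I)"
    by (rule vs.orthogonal_lin_indpt) (use xc xx in \<open>auto simp: I_def\<close>)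
  moreover have "x ` I \<subseteq> vs.span (set (cols X))"
    using X orth_mat_carrier[OF C] vs.col_space_eq[OF X]
    by (auto simp: x_def I_def vs.col_space_def)
  ultimately have "card (x ` I) \<le> vs.rank X"
    using vs.card_lin_indpt_le_rank[OF X] by blast
  then show ?thesis using card_image[OF inj] by (simp add: I_def)
qed

lemma index_mult_transpose_scaled_cols:
  fixes U V :: "real mat"
  assumes U: "U \<in> carrier_mat m d" and V: "V \<in> carrier_mat n d"
    and \<sigma>: "bij_betw \<sigma> {0..<k} I" and "k \<le> d"
    and colU: "\<And>j. j < d \<Longrightarrow> col U j = (if j < k then \<alpha> (\<sigma> j) \<cdot>\<^sub>v y (\<sigma> j) else 0\<^sub>v m)"
    and colV: "\<And>j. j < d \<Longrightarrow> col V j = (if j < k then \<beta> (\<sigma> j) \<cdot>\<^sub>v z (\<sigma> j) else 0\<^sub>v n)"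
    and y: "\<And>i. i \<in> I \<Longrightarrow> y i \<in> carrier_vec m" and z: "\<And>i. i \<in> I \<Longrightarrow> z i \<in> carrier_vec n"
    and a: "a < m" and b: "b < n"
  shows "(U * transpose_mat V) $$ (a, b) = (\<Sum>i\<in>I. \<alpha> i * \<beta> i * (y i $ a * z i $ b))"
proof -
  have "(U * transpose_mat V) $$ (a, b) = (\<Sum>j<d. col U j $ a * col V j $ b)"
    using U V a b by (simp add: scalar_prod_def atLeast0LessThan)
  also have "\<dots> = (\<Sum>j<d. if j < k then \<alpha> (\<sigma> j) * \<beta> (\<sigma> j) * (y (\<sigma> j) $ a * z (\<sigma> j) $ b) else 0)"
  proof (intro sum.cong refl)
    fix j assume "j \<in> {..<d}"
    then show "col U j $ a * col V j $ b
        = (if j < k then \<alpha> (\<sigma> j) * \<beta> (\<sigma> j) * (y (\<sigma> j) $ a * z (\<sigma> j) $ b) else 0)"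
      using a b y[of "\<sigma> j"] z[of "\<sigma> j"] bij_betwE[OF \<sigma>] by (auto simp: colU colV)
  qed
  also have "\<dots> = (\<Sum>i\<in>I. \<alpha> i * \<beta> i * (y i $ a * z i $ b))"
    by (rule sum_reindex_bij_betw_prefix[OF \<sigma> \<open>k \<le> d\<close>])
  finally show ?thesis .
qed

lemma exists_mat_scaled_cols:
  assumes "\<And>i. i \<in> I \<Longrightarrow> y i \<in> carrier_vec r" and "bij_betw \<sigma> {0..<k} I"
  shows "\<exists>Y \<in> carrier_mat r d. \<forall>j<d. col Y j = (if j < k then \<alpha> (\<sigma> j) \<cdot>\<^sub>v y (\<sigma> j) else 0\<^sub>v r)"
proof
  define c where "c j = (if j < k then \<alpha> (\<sigma> j) \<cdot>\<^sub>v y (\<sigma> j) else 0\<^sub>v r)" for j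
  have "c j \<in> carrier_vec r" for j
    using assms bij_betwE[OF assms(2)] by (auto simp: c_def)
  then show "\<forall>j<d. col (mat_of_cols r (map c [0..<d])) j = c j"
    by simp
  show "mat_of_cols r (map c [0..<d]) \<in> carrier_mat r d"
    using mat_of_cols_carrier(1)[of r "map c [0..<d]"] by (simp only: length_map length_upt diff_zero)
qed

lemma gram_balanced_factorization:
  fixes X :: "real mat"
  assumes X: "X \<in> carrier_mat m n" and rk: "vec_space.rank m X \<le> d" and C: "orth_mat n C"
    and XX: "transpose_mat X * X = C * diagonal n \<mu> * transpose_mat C" and \<mu>: "\<forall>i<n. \<mu> i \<ge> 0"
    and e: "e1 + e2 = 1/2"
  obtains U V where "U \<in> carrier_mat m d" and "V \<in> carrier_mat n d" and "X = U * transpose_mat V"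
    and "\<And>q. schatten q U = (\<Sum>i<n. \<mu> i powr (e1 * q)) powr (1 / q)"
    and "\<And>q. schatten q V = (\<Sum>i<n. \<mu> i powr (e2 * q)) powr (1 / q)"
proof -
  have Cc: "C \<in> carrier_mat n n" using C by (rule orth_mat_carrier)
  define I where "I = {i. i < n \<and> \<mu> i > 0}"
  define k where "k = card I"
  have kd: "k \<le> d"
    using card_pos_gram_eigenvalues_le_rank[OF X C XX] rk by (simp add: k_def I_def)
  obtain \<sigma> where \<sigma>: "bij_betw \<sigma> {0..<k} I"
    using ex_bij_betw_nat_finite[of I] unfolding k_def I_def by auto
  define x where "x i = X *\<^sub>v col C i" for i
  define \<alpha> where "\<alpha> i = \<mu> i powr (e1 - 1/2)" for i
  have Ci: "col C i \<in> carrier_vec n" for i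
    using Cc unfolding col_def carrier_vec_def by simp
  then have xc: "x i \<in> carrier_vec m" for i
    using X by (simp add: x_def)
  obtain U where U: "U \<in> carrier_mat m d"
    and colU: "\<forall>j<d. col U j = (if j < k then \<alpha> (\<sigma> j) \<cdot>\<^sub>v x (\<sigma> j) else 0\<^sub>v m)"
    using exists_mat_scaled_cols[where y = x and \<alpha> = \<alpha>, OF xc \<sigma>] by blast
  obtain V where V: "V \<in> carrier_mat n d"
    and colV: "\<forall>j<d. col V j = (if j < k then \<mu> (\<sigma> j) powr e2 \<cdot>\<^sub>v col C (\<sigma> j) else 0\<^sub>v n)"
    using exists_mat_scaled_cols[where y = "col C" and \<alpha> = "\<lambda>i. \<mu> i powr e2", OF Ci \<sigma>] by blast
  have \<alpha>: "\<alpha> i * \<mu> i powr e2 = 1" "\<alpha> i * \<alpha> i * \<mu> i = \<mu> i powr (2 * e1)" if "i \<in> I" for i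
  proof -
    have "\<alpha> i * \<mu> i powr e2 = \<mu> i powr (e1 - 1/2 + e2)"
      by (simp add: \<alpha>_def powr_add)
    also have "e1 - 1/2 + e2 = 0" using e by simp
    finally show "\<alpha> i * \<mu> i powr e2 = 1" using that by (simp add: I_def)
    have "\<alpha> i * \<alpha> i * \<mu> i powr 1 = \<mu> i powr (2 * e1)"
      unfolding \<alpha>_def powr_add[symmetric] by simp
    then show "\<alpha> i * \<alpha> i * \<mu> i = \<mu> i powr (2 * e1)" using that by (simp add: I_def)
  qed
  have sum_I: "(\<Sum>i\<in>I. \<mu> i powr a) = (\<Sum>i<n. \<mu> i powr a)" for a
    by (rule sum.mono_neutral_left) (use \<mu> in \<open>auto simp: I_def order_le_less\<close>)
  have "X = U * transpose_mat V"
  proof (rule eq_matI)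
    fix a b assume "a < dim_row (U * transpose_mat V)" "b < dim_col (U * transpose_mat V)"
    then have a: "a < m" and b: "b < n" using U V by auto
    have "(U * transpose_mat V) $$ (a, b) = (\<Sum>i\<in>I. \<alpha> i * \<mu> i powr e2 * (x i $ a * col C i $ b))"
      by (rule index_mult_transpose_scaled_cols[OF U V \<sigma> kd colU[rule_format] colV[rule_format] xc Ci a b])
    also have "\<dots> = (\<Sum>i\<in>I. (X *\<^sub>v col C i) $ a * C $$ (b, i))"
      using b Cc \<alpha> by (intro sum.cong refl) (simp add: x_def I_def)
    also have "\<dots> = X $$ (a, b)"
      using gram_spectral_expansion[OF X C XX \<mu> a b] by (simp add: I_def)
    finally show "X $$ (a, b) = (U * transpose_mat V) $$ (a, b)" ..
  qed (use U V X in auto)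
  moreover have "schatten q U = (\<Sum>i<n. \<mu> i powr (e1 * q)) powr (1 / q)" for q
  proof -
    have "schatten q U = (\<Sum>i\<in>I. (\<alpha> i * \<alpha> i * \<mu> i) powr (q / 2)) powr (1 / q)"
      by (rule schatten_scaled_orthogonal_cols[OF U \<sigma> kd colU[rule_format] xc])
        (use gram_spectral_cols[OF X C XX] in \<open>auto simp: x_def I_def\<close>)
    then show ?thesis
      using \<alpha> by (simp add: powr_powr sum_I[symmetric])
  qed
  moreover have "schatten q V = (\<Sum>i<n. \<mu> i powr (e2 * q)) powr (1 / q)" for q
  proof -
    have "schatten q V = (\<Sum>i\<in>I. (\<mu> i powr e2 * \<mu> i powr e2 * 1) powr (q / 2)) powr (1 / q)"
      by (rule schatten_scaled_orthogonal_cols[OF V \<sigma> kd colV[rule_format] Ci])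
        (use orth_mat_cols[OF C] in \<open>auto simp: I_def\<close>)
    then show ?thesis
      by (simp add: powr_powr sum_I powr_add[symmetric])
  qed
  ultimately show ?thesis using that U V by blast
qed

lemma schatten_factorization_rank:
  fixes X :: "real mat"
  assumes X: "X \<in> carrier_mat m n" and rk: "vec_space.rank m X \<le> d"
    and p: "p > 0" and p1: "p1 > 0" and p2: "p2 > 0" and pp: "1/p1 + 1/p2 = 1/p"
  obtains U V where "U \<in> carrier_mat m d" and "V \<in> carrier_mat n d" and "X = U * transpose_mat V"
    and "schatten p X = schatten p1 U * schatten p2 V"
proof -
  obtain C \<mu> where C: "orth_mat n C" and XX: "transpose_mat X * X = C * diagonal n \<mu> * transpose_mat C"
    and \<mu>: "\<forall>i<n. \<mu> i \<ge> 0" using gram_spectral[OF X] by blast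
  have e: "p / (2 * p1) + p / (2 * p2) = 1/2"
    using pp p by (simp add: field_simps)
  obtain U V where U: "U \<in> carrier_mat m d" and V: "V \<in> carrier_mat n d" and XUV: "X = U * transpose_mat V"
    and SU: "\<And>q. schatten q U = (\<Sum>i<n. \<mu> i powr (p / (2 * p1) * q)) powr (1 / q)"
    and SV: "\<And>q. schatten q V = (\<Sum>i<n. \<mu> i powr (p / (2 * p2) * q)) powr (1 / q)"
    using gram_balanced_factorization[OF X rk C XX \<mu> e] by blast
  have "schatten p X = (\<Sum>i<n. \<mu> i powr (p / 2)) powr (1/p1 + 1/p2)"
    using schatten_eq_sum[OF X C XX \<mu>] pp by simp
  also have "\<dots> = schatten p1 U * schatten p2 V"
    using p1 p2 by (simp add: SU SV powr_add)
  finally show ?thesis using that U V XUV by blast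
qed

theorem theorem1:
  fixes X :: "real mat" and m n d r :: nat and p p1 p2 :: real
  assumes "X \<in> carrier_mat m n"
    and "vec_space.rank m X = r" and "r \<le> d"
    and "0 < p" and "p \<le> 1" and "0 < p1" and "0 < p2"
    and "1 / p1 + 1 / p2 = 1 / p"
  shows "(\<exists>U V. U \<in> carrier_mat m d \<and> V \<in> carrier_mat n d \<and> X = U * transpose_mat V \<and>
            schatten p X = schatten p1 U * schatten p2 V)
       \<and> (\<forall>U V. U \<in> carrier_mat m d \<longrightarrow> V \<in> carrier_mat n d \<longrightarrow> X = U * transpose_mat V \<longrightarrow>
            schatten p X \<le> schatten p1 U * schatten p2 V)"
proof (intro conjI allI impI)
  obtain U V where "U \<in> carrier_mat m d" "V \<in> carrier_mat n d" "X = U * transpose_mat V"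
    "schatten p X = schatten p1 U * schatten p2 V"
    using schatten_factorization_rank[OF assms(1) _ assms(4,6,7,8)] assms(2,3) by blast
  then show "\<exists>U V. U \<in> carrier_mat m d \<and> V \<in> carrier_mat n d \<and> X = U * transpose_mat V \<and>
      schatten p X = schatten p1 U * schatten p2 V" by blast
next
  fix U V assume "U \<in> carrier_mat m d" "V \<in> carrier_mat n d" "X = U * transpose_mat V"
  then show "schatten p X \<le> schatten p1 U * schatten p2 V"
    using schatten_holder[of U m d V n p p1 p2] assms(4-8) by simp
qed

end
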